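(* Let $\alpha>2$, $\theta_c>0$, $\overline{Q}>0$, $0<\lambda_b^{\min}\le\lambda_b\le\lambda_b^{\max}$, $\lambda_d>0$, $\rho\in(0,1)$, $\eta_a\in(0,1]$, and $\nu>-\frac{2}{\alpha}$. For a random distance $\|X\|$ with $\|X\|^2$ exponentially distributed with rate $\pi\lambda_b$, define the transmit power $$Q(\|X\|)=\frac{\overline{Q}\|X\|^{\alpha\nu}}{\Gamma(1+\frac{\alpha\nu}{2})}\Big[(\pi\lambda_b^{\min})^{\frac{\alpha\nu}{2}}\mathbb{1}(\nu\ge0)+(\pi\lambda_b^{\max})^{\frac{\alpha\nu}{2}}\mathbb{1}(-\tfrac{2}{\alpha}<\nu<0)\Big].$$ Consider a receiver at the origin and a desired transmitter at distance $\|X_1\|$ with $\|X_1\|^2\sim\mathrm{Exp}(\pi\lambda_b)$, using power $Q_1=Q(\|X_1\|)$; interferers located at the points $D_j$ of a homogeneous Poisson point process of intensity $\rho\eta_a\lambda_d$ in $\mathbb{R}^2$, using i.i.d. powers $Q_j$ distributed as $Q(\|X\|)$; and i.i.d. exponential (mean one) fading gains $H_1,\{H_j\}$; all these ingredients mutually independent. Let $\gamma_1=\frac{Q_1H_1\|X_1\|^{-\alpha}}{\sum_jQ_jH_j\|D_j\|^{-\alpha}}$. Then $$\eta_c(\nu,n_a):=\mathbb{P}[\gamma_1\ge\theta_c]=\int_0^{\infty}e^{-[n_a\Gamma(1+\nu)u^{1-\nu}+u]}\,\mathrm{d}u,\qquad n_a=\frac{\lambda_d}{\lambda_b}\rho\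eta_a\theta_c^{\frac{2}{\alpha}}\,\Gamma\!\left(1+\tfrac{2}{\alpha}\right)\Gamma\!\left(1-\tfrac{2}{\alpha}\right).$$
   Context: $\Gamma$ is the Gamma function and $\mathbb{1}(\cdot)$ the indicator function. This is the uplink coverage probability under Rayleigh fading with the proposed energy-efficient uplink power control; $\nu=0$ is constant power and $\nu=1$ channel inversion. *)

theory Defs
  imports "HOL-Probability.Probability"
begin

definition ppp_space :: "'a measure \<Rightarrow> 'a set measure" where
  "ppp_space \<mu> = sigma UNIV
     {{S. finite (S \<inter> A) \<and> card (S \<inter> A) = k} | A k. A \<in> sets \<mu> \<and> emeasure \<mu> A < \<infinity>}"

definition (in prob_space) poisson_point_process :: "'b measure \<Rightarrow> ('a \<Rightarrow> 'b set) \<Rightarrow> bool" where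
  "poisson_point_process \<mu> \<Phi> \<longleftrightarrow>
     \<Phi> \<in> measurable M (ppp_space \<mu>) \<and>
     (\<forall>A\<in>sets \<mu>. emeasure \<mu> A < \<infinity> \<longrightarrow>
        (AE \<omega> in M. finite (\<Phi> \<omega> \<inter> A)) \<and>
        (\<forall>k::nat. prob {\<omega>\<in>space M. card (\<Phi> \<omega> \<inter> A) = k}
             = (enn2real (emeasure \<mu> A)) ^ k / fact k * exp (- enn2real (emeasure \<mu> A)))) \<and>
     (\<forall>(n::nat) A. (\<forall>i<n. A i \<in> sets \<mu> \<and> emeasure \<mu> (A i) < \<infinity>) \<and> disjoint_family_on A {..<n}
        \<longrightarrow> indep_vars (\<lambda>_. count_space UNIV) (\<lambda>i \<omega>. card (\<Phi> \<omega> \<inter> A i)) {..<n})"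

definition exp_distr :: "real \<Rightarrow> real measure" where
  "exp_distr l = density lborel (exponential_density l)"

definition Qpow :: "real \<Rightarrow> real \<Rightarrow> real \<Rightarrow> real \<Rightarrow> real \<Rightarrow> real \<Rightarrow> real" where
  "Qpow \<alpha> \<nu> Qbar lmin lmax r =
     Qbar * r powr (\<alpha> * \<nu>) / Gamma (1 + \<alpha> * \<nu> / 2) *
     ((pi * lmin) powr (\<alpha> * \<nu> / 2) * (if \<nu> \<ge> 0 then 1 else 0)
      + (pi * lmax) powr (\<alpha> * \<nu> / 2) * (if - 2 / \<alpha> < \<nu> \<and> \<nu> < 0 then 1 else 0))"

text \<open>Distribution of the transmit power Q(|X|) when |X|^2 ~ Exp(pi lambda_b).\<close>
definition Q_distr :: "real \<Rightarrow> real \<Rightarrow> real \<Rightarrow> real \<Rightarrow> real \<Rightarrow> real \<Rightarrow> real measure" where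
  "Q_distr \<alpha> \<nu> Qbar lmin lmax lb =
     distr (exp_distr (pi * lb)) borel (\<lambda>s. Qpow \<alpha> \<nu> Qbar lmin lmax (sqrt s))"

text \<open>Intensity measure of the independently marked interferer PPP on
  R^2 x (power) x (fading): (rho eta_a lambda_d) Lebesgue x law of Q x Exp(1).\<close>
definition interferer_intensity ::
  "real \<Rightarrow> real \<Rightarrow> real \<Rightarrow> real \<Rightarrow> real \<Rightarrow> real \<Rightarrow> real \<Rightarrow> ((real \<times> real) \<times> real \<times> real) measure" where
  "interferer_intensity lI \<alpha> \<nu> Qbar lmin lmax lb =
     density (lborel :: (real \<times> real) measure) (\<lambda>_. ennreal lI)
       \<Otimes>\<^sub>M (Q_distr \<alpha> \<nu> Qbar lmin lmax lb \<Otimes>\<^sub>M exp_distr 1)"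

end

theory Submission
  imports Defs "HOL-Analysis.Ball_Volume"
begin

(* Given the link distance r and the interferers, the coverage event is H1 >= theta I / sigma(r),
   where sigma(r) = Q(r) r^(-alpha) and I = sum_j Q_j H_j |D_j|^(-alpha); since H1 ~ Exp(1), its
   conditional probability is exp(-theta I / sigma(r)), so the coverage probability is an average
   of the Laplace transform of the interference.  For a Poisson point process with intensity mu,
   E exp(-sum_j g(p_j)) = exp(-integral (1 - exp(-g)) dmu); this is derived from the Poisson
   counts by approximating g with simple functions.  For g(x,q,h) = s q h |x|^(-alpha) the
   spatial integral equals pi Gamma(1 - 2/alpha) (s q h)^(2/alpha), and averaging over the marks
   contributes Gamma(1 + 2/alpha) E[Q^(2/alpha)], where E[Q^(2/alpha)] is proportional to
   E[|X|^(2 nu)] = (pi lambda_b)^(-nu) Gamma(1 + nu).  The conditional coverage probability is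
   therefore exp(-A r^(2(1 - nu))), and averaging over r^2 ~ Exp(pi lambda_b) with the
   substitution u = pi lambda_b r^2 gives the stated integral. *)

section \<open>Elementary integrals\<close>

lemma one_minus_exp_eq_nn_integral:
  assumes "b \<ge> 0"
  shows "ennreal (1 - exp (- b)) = (\<integral>\<^sup>+w. ennreal (exp (- w)) * indicator {0..b} w \<partial>lborel)"
  using nn_intergal_power_times_exp_Icc[OF assms, of 0] by simp

lemma emeasure_norm_powr_superlevel:
  fixes a w \<alpha> :: real
  assumes "a > 0" "w > 0" "\<alpha> > 0"
  shows "emeasure lborel {x::real\<times>real. w \<le> a * norm x powr (-\<alpha>)} = ennreal (pi * (a / w) powr (2 / \<alpha>))"
proof -
  define r where "r = (a / w) powr (1 / \<alpha>)"
  have r: "r > 0" using assms by (simp add: r_def)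
  have eq: "{x::real\<times>real. w \<le> a * norm x powr (-\<alpha>)} = cball 0 r - {0}"
  proof (intro set_eqI iffI)
    fix x :: "real \<times> real" assume h: "x \<in> {x::real\<times>real. w \<le> a * norm x powr (-\<alpha>)}"
    hence h: "w \<le> a * norm x powr (-\<alpha>)" by simp
    have "x \<noteq> 0" using h assms by auto
    hence nx: "norm x > 0" by simp
    have "w \<le> a / norm x powr \<alpha>" using h nx by (simp add: powr_minus divide_inverse)
    hence "norm x powr \<alpha> \<le> a / w" using nx assms by (simp add: field_simps)
    hence "(norm x powr \<alpha>) powr (1/\<alpha>) \<le> (a / w) powr (1/\<alpha>)"
      using assms nx by (intro powr_mono2) auto
    hence "norm x \<le> r" using assms nx by (simp add: powr_powr r_def)
    thus "x \<in> cball 0 r - {0}" using \<open>x \<noteq> 0\<close> by simp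
  next
    fix x :: "real \<times> real" assume "x \<in> cball 0 r - {0}"
    hence nx: "norm x > 0" "norm x \<le> r" by auto
    have "norm x powr \<alpha> \<le> r powr \<alpha>" using nx assms by (intro powr_mono2) auto
    also have "r powr \<alpha> = a / w" using assms by (simp add: r_def powr_powr)
    finally have "norm x powr \<alpha> \<le> a / w" .
    hence "w \<le> a / norm x powr \<alpha>" using nx assms by (simp add: field_simps)
    thus "x \<in> {x::real\<times>real. w \<le> a * norm x powr (-\<alpha>)}" using nx by (simp add: powr_minus divide_inverse)
  qed
  have "emeasure lborel (cball (0::real\<times>real) r - {0}) = emeasure lborel (cball (0::real\<times>real) r)"
    by (intro emeasure_Diff_null_set) (auto intro: emeasure_lborel_countable simp: null_sets_def)
  also have "\<dots> = ennreal (unit_ball_vol (real DIM(real\<times>real)) * r ^ DIM(real\<times>real))"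
    using r by (intro emeasure_cball) simp
  also have "\<dots> = ennreal (pi * (a / w) powr (2 / \<alpha>))"
    using assms by (simp add: unit_ball_vol_2 r_def power2_eq_square powr_add[symmetric])
  finally show ?thesis using eq by simp
qed

lemma nn_integral_one_minus_exp_norm_powr:
  fixes a \<alpha> :: real
  assumes a: "a \<ge> 0" and al: "\<alpha> > 2"
  shows "(\<integral>\<^sup>+(x::real\<times>real). ennreal (1 - exp (- (a * norm x powr (-\<alpha>)))) \<partial>lborel)
           = ennreal (pi * Gamma (1 - 2 / \<alpha>) * a powr (2 / \<alpha>))"
proof (cases "a = 0")
  case True thus ?thesis by simp
next
  case False
  hence a: "a > 0" using a by simp
  have PSF: "pair_sigma_finite (lborel :: (real\<times>real) measure) (lborel :: real measure)"
    by (simp add: pair_sigma_finite_def lborel.sigma_finite_measure_axioms)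
  have inner: "(\<integral>\<^sup>+(x::real\<times>real). ennreal (exp (- w)) * indicator {0..a * norm x powr (-\<alpha>)} w \<partial>lborel)
      = ennreal (indicator {0..} w * w powr ((1 - 2 / \<alpha>) - 1) / exp w) * ennreal (pi * a powr (2 / \<alpha>))"
    if "w \<noteq> 0" for w
  proof (cases "w > 0")
    case False
    hence "w < 0" using that by simp
    thus ?thesis by (simp add: indicator_def)
  next
    case True
    have "(\<integral>\<^sup>+(x::real\<times>real). ennreal (exp (- w)) * indicator {0..a * norm x powr (-\<alpha>)} w \<partial>lborel)
        = (\<integral>\<^sup>+(x::real\<times>real). ennreal (exp (- w)) * indicator {x. w \<le> a * norm x powr (-\<alpha>)} x \<partial>lborel)"
      using True by (intro nn_integral_cong) (simp add: indicator_def)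
    also have "\<dots> = ennreal (exp (- w)) * emeasure lborel {x::real\<times>real. w \<le> a * norm x powr (-\<alpha>)}"
      by (intro nn_integral_cmult_indicator) measurable
    also have "\<dots> = ennreal (exp (- w)) * ennreal (pi * (a / w) powr (2 / \<alpha>))"
      using a True al by (subst emeasure_norm_powr_superlevel) auto
    also have "\<dots> = ennreal (indicator {0..} w * w powr ((1 - 2 / \<alpha>) - 1) / exp w) * ennreal (pi * a powr (2 / \<alpha>))"
      using True a al by (simp add: ennreal_mult'[symmetric] powr_divide powr_minus exp_minus field_simps)
    finally show ?thesis .
  qed
  have "(\<integral>\<^sup>+(x::real\<times>real). ennreal (1 - exp (- (a * norm x powr (-\<alpha>)))) \<partial>lborel)
      = (\<integral>\<^sup>+(x::real\<times>real). (\<integral>\<^sup>+w. ennreal (exp (- w)) * indicator {0..a * norm x powr (-\<alpha>)} w \<partial>lborel) \<partial>lborel)"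
    using a by (intro nn_integral_cong one_minus_exp_eq_nn_integral) simp
  also have "\<dots> = (\<integral>\<^sup>+w. (\<integral>\<^sup>+(x::real\<times>real). ennreal (exp (- w)) * indicator {0..a * norm x powr (-\<alpha>)} w \<partial>lborel) \<partial>lborel)"
    unfolding indicator_def atLeastAtMost_iff by (intro pair_sigma_finite.Fubini'[OF PSF, symmetric]) measurable
  also have "\<dots> = (\<integral>\<^sup>+w. ennreal (indicator {0..} w * w powr ((1 - 2 / \<alpha>) - 1) / exp w) * ennreal (pi * a powr (2 / \<alpha>)) \<partial>lborel)"
    using AE_lborel_singleton[of 0] by (intro nn_integral_cong_AE) (auto elim!: eventually_mono simp: inner)
  also have "\<dots> = (\<integral>\<^sup>+w. ennreal (indicator {0..} w * w powr ((1 - 2 / \<alpha>) - 1) / exp w) \<partial>lborel) * ennreal (pi * a powr (2 / \<alpha>))"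
    by (rule nn_integral_multc) measurable
  also have "\<dots> = ennreal (Gamma (1 - 2 / \<alpha>)) * ennreal (pi * a powr (2 / \<alpha>))"
    using al by (subst Gamma_conv_nn_integral_real) auto
  also have "\<dots> = ennreal (pi * Gamma (1 - 2 / \<alpha>) * a powr (2 / \<alpha>))"
    using al by (subst ennreal_mult'[symmetric]) (auto intro!: Gamma_real_pos simp: mult_ac)
  finally show ?thesis .
qed

lemma nn_integral_one_minus_exp_max_norm_powr:
  fixes m t \<alpha> :: real
  assumes t: "t \<ge> 0" and al: "\<alpha> > 2"
  shows "(\<integral>\<^sup>+(x::real\<times>real). ennreal (1 - exp (- (t * max 0 (m * norm x powr (- \<alpha>))))) \<partial>lborel)
       = ennreal (pi * Gamma (1 - 2 / \<alpha>) * t powr (2 / \<alpha>)) * ennreal ((max 0 m) powr (2 / \<alpha>))"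
proof -
  have "max 0 (m * norm x powr (- \<alpha>)) = max 0 m * norm x powr (- \<alpha>)" for x :: "real \<times> real"
    by (simp add: max_mult_distrib_right max.commute)
  hence "(\<integral>\<^sup>+(x::real\<times>real). ennreal (1 - exp (- (t * max 0 (m * norm x powr (- \<alpha>))))) \<partial>lborel)
      = (\<integral>\<^sup>+(x::real\<times>real). ennreal (1 - exp (- ((t * max 0 m) * norm x powr (- \<alpha>)))) \<partial>lborel)"
    by (simp add: mult.assoc)
  also have "\<dots> = ennreal (pi * Gamma (1 - 2 / \<alpha>) * (t * max 0 m) powr (2 / \<alpha>))"
    using t al by (intro nn_integral_one_minus_exp_norm_powr) auto
  also have "\<dots> = ennreal (pi * Gamma (1 - 2 / \<alpha>) * t powr (2 / \<alpha>)) * ennreal ((max 0 m) powr (2 / \<alpha>))"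
    using t al by (simp add: powr_mult ennreal_mult'[symmetric] mult_ac Gamma_real_pos)
  finally show ?thesis .
qed

lemma nn_integral_exponential_density_powr:
  fixes l p :: real
  assumes l: "l > 0" and p: "p > -1"
  shows "(\<integral>\<^sup>+s. ennreal (exponential_density l s) * ennreal (s powr p) \<partial>lborel) = ennreal (l powr (-p) * Gamma (1 + p))"
proof -
  have "ennreal (Gamma (1 + p)) = (\<integral>\<^sup>+u. ennreal (indicator {0..} u * u powr (1 + p - 1) / exp u) \<partial>lborel)"
    using p by (intro Gamma_conv_nn_integral_real) simp
  also have "\<dots> = ennreal \<bar>l\<bar> * (\<integral>\<^sup>+s. ennreal (indicator {0..} (0 + l * s) * (0 + l * s) powr (1 + p - 1) / exp (0 + l * s)) \<partial>lborel)"
    using l by (intro nn_integral_real_affine) auto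
  also have "\<dots> = ennreal (l powr p) * (\<integral>\<^sup>+s. ennreal (exponential_density l s) * ennreal (s powr p) \<partial>lborel)"
  proof -
    have "(\<integral>\<^sup>+s. ennreal (indicator {0..} (0 + l * s) * (0 + l * s) powr (1 + p - 1) / exp (0 + l * s)) \<partial>lborel)
        = (\<integral>\<^sup>+s. ennreal (l powr p / l) * (ennreal (exponential_density l s) * ennreal (s powr p)) \<partial>lborel)"
      using l by (intro nn_integral_cong)
        (auto simp: exponential_density_def indicator_def ennreal_mult'[symmetric] powr_mult zero_le_mult_iff exp_minus field_simps)
    also have "\<dots> = ennreal (l powr p / l) * (\<integral>\<^sup>+s. ennreal (exponential_density l s) * ennreal (s powr p) \<partial>lborel)"
      by (intro nn_integral_cmult) measurable
    finally show ?thesis using l by (simp add: ennreal_mult'[symmetric] mult.assoc[symmetric])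
  qed
  finally have *: "ennreal (Gamma (1 + p)) = ennreal (l powr p) * (\<integral>\<^sup>+s. ennreal (exponential_density l s) * ennreal (s powr p) \<partial>lborel)" .
  have "ennreal (l powr (-p) * Gamma (1 + p)) = ennreal (l powr (-p)) * ennreal (Gamma (1 + p))"
    using l by (simp add: ennreal_mult')
  also have "\<dots> = ennreal (l powr (-p) * l powr p) * (\<integral>\<^sup>+s. ennreal (exponential_density l s) * ennreal (s powr p) \<partial>lborel)"
    using l by (simp add: * ennreal_mult' mult.assoc)
  also have "l powr (-p) * l powr p = 1" using l by (simp add: powr_add[symmetric])
  finally show ?thesis by simp
qed

lemma nn_integral_exponential_density_tail:
  fixes x :: real
  assumes x: "x \<ge> 0"
  shows "(\<integral>\<^sup>+h. ennreal (exponential_density 1 h) * indicator {x..} h \<partial>lborel) = ennreal (exp (- x))"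
proof -
  have "(\<integral>\<^sup>+h. ennreal (exponential_density 1 h) * indicator {x..} h \<partial>lborel)
      = (\<integral>\<^sup>+u. ennreal (exponential_density 1 (x + u)) * indicator {x..} (x + u) \<partial>lborel)"
    using nn_integral_real_affine[of "\<lambda>h. ennreal (exponential_density 1 h) * indicator {x..} h" 1 x] by simp
  also have "\<dots> = (\<integral>\<^sup>+u. ennreal (exp (- x)) * (ennreal (u ^ 0 * exp (- u)) * indicator {0..} u) \<partial>lborel)"
    using x by (intro nn_integral_cong) (auto simp: exponential_density_def indicator_def ennreal_mult'[symmetric] exp_add[symmetric])
  also have "\<dots> = ennreal (exp (- x)) * (\<integral>\<^sup>+u. ennreal (u ^ 0 * exp (- u)) * indicator {0..} u \<partial>lborel)"
    by (intro nn_integral_cmult) measurable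
  also have "\<dots> = ennreal (exp (- x))"
    using nn_intergal_power_times_exp_Ici[of 0] by simp
  finally show ?thesis .
qed

section \<open>Sums over point configurations\<close>

definition ecard :: "'a set \<Rightarrow> ennreal" where
  "ecard X = (if finite X then of_nat (card X) else \<top>)"

lemma sum_eq_sum_level_sets:
  fixes s :: "'b \<Rightarrow> ennreal"
  assumes fin: "finite (range s)" and T: "finite T"
  shows "(\<Sum>p\<in>T. s p) = (\<Sum>v\<in>range s - {0}. v * of_nat (card (T \<inter> {p. s p = v})))"
proof -
  have "(\<Sum>p\<in>T. s p) = (\<Sum>p\<in>T. \<Sum>v\<in>range s - {0}. v * indicator {p. s p = v} p)"
  proof (intro sum.cong refl)
    fix p
    show "s p = (\<Sum>v\<in>range s - {0}. v * indicator {p. s p = v} p)"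
    proof (cases "s p = 0")
      case True
      have "(\<Sum>v\<in>range s - {0}. v * indicator {p. s p = v} p) = 0"
        using True by (intro sum.neutral) (auto simp: indicator_def)
      thus ?thesis using True by simp
    next
      case False
      hence "(\<Sum>v\<in>range s - {0}. v * indicator {p. s p = v} p) = s p * indicator {p. s p = s p} p"
        using fin by (intro sum.remove[THEN trans]) (auto intro!: sum.neutral simp: indicator_def)
      thus ?thesis by simp
    qed
  qed
  also have "\<dots> = (\<Sum>v\<in>range s - {0}. \<Sum>p\<in>T. v * indicator {p. s p = v} p)"
    by (rule sum.swap)
  also have "\<dots> = (\<Sum>v\<in>range s - {0}. v * of_nat (card (T \<inter> {p. s p = v})))"
    using T by (intro sum.cong refl) (simp add: mult.commute; simp add: Int_def)
  finally show ?thesis .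
qed

lemma infsum_eq_sum_level_sets:
  fixes s :: "'b \<Rightarrow> ennreal"
  assumes fin: "finite (range s)"
  shows "infsum s S = (\<Sum>v\<in>range s - {0}. v * ecard (S \<inter> {p. s p = v}))"
proof (rule antisym)
  show "infsum s S \<le> (\<Sum>v\<in>range s - {0}. v * ecard (S \<inter> {p. s p = v}))"
    unfolding nonneg_infsum_complete[OF zero_le]
  proof (rule SUP_least)
    fix T assume T: "T \<in> {T. finite T \<and> T \<subseteq> S}"
    have "(\<Sum>p\<in>T. s p) = (\<Sum>v\<in>range s - {0}. v * of_nat (card (T \<inter> {p. s p = v})))"
      using T fin by (intro sum_eq_sum_level_sets) auto
    also have "\<dots> \<le> (\<Sum>v\<in>range s - {0}. v * ecard (S \<inter> {p. s p = v}))"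
    proof (intro sum_mono mult_left_mono)
      fix v
      show "of_nat (card (T \<inter> {p. s p = v})) \<le> ecard (S \<inter> {p. s p = v})"
        using T by (auto simp: ecard_def intro: card_mono)
    qed simp
    finally show "(\<Sum>p\<in>T. s p) \<le> (\<Sum>v\<in>range s - {0}. v * ecard (S \<inter> {p. s p = v}))" .
  qed
next
  show "(\<Sum>v\<in>range s - {0}. v * ecard (S \<inter> {p. s p = v})) \<le> infsum s S"
  proof (cases "\<forall>v\<in>range s - {0}. finite (S \<inter> {p. s p = v})")
    case True
    define T where "T = (\<Union>v\<in>range s - {0}. S \<inter> {p. s p = v})"
    have Tf: "finite T" unfolding T_def using True fin by (intro finite_UN_I) auto
    have "(\<Sum>v\<in>range s - {0}. v * ecard (S \<inter> {p. s p = v}))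
        = (\<Sum>v\<in>range s - {0}. v * of_nat (card (T \<inter> {p. s p = v})))"
    proof (intro sum.cong refl)
      fix v assume v: "v \<in> range s - {0}"
      have "T \<inter> {p. s p = v} = S \<inter> {p. s p = v}" using v by (auto simp: T_def)
      thus "v * ecard (S \<inter> {p. s p = v}) = v * of_nat (card (T \<inter> {p. s p = v}))"
        using True v by (simp add: ecard_def)
    qed
    also have "\<dots> = (\<Sum>p\<in>T. s p)" using fin Tf by (intro sum_eq_sum_level_sets[symmetric])
    also have "\<dots> \<le> infsum s S"
      unfolding nonneg_infsum_complete[OF zero_le] using Tf by (intro SUP_upper) (auto simp: T_def)
    finally show ?thesis .
  next
    case False
    then obtain v where v: "v \<in> range s - {0}" "infinite (S \<inter> {p. s p = v})" by blast
    have "infsum s (S \<inter> {p. s p = v}) = \<infinity>"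
      using v by (intro infsum_superconst_infinite_ennreal[where b = v])
        (auto simp: zero_less_iff_neq_zero)
    moreover have "infsum s (S \<inter> {p. s p = v}) \<le> infsum s S"
      unfolding nonneg_infsum_complete[OF zero_le] by (intro SUP_subset_mono) auto
    ultimately show ?thesis by (simp add: top_unique)
  qed
qed

lemma infsum_SUP_ennreal:
  fixes f :: "nat \<Rightarrow> 'b \<Rightarrow> ennreal"
  assumes "incseq f"
  shows "infsum (\<lambda>p. SUP i. f i p) S = (SUP i. infsum (f i) S)"
proof -
  have "infsum (\<lambda>p. SUP i. f i p) S = (SUP T\<in>{T. finite T \<and> T \<subseteq> S}. \<Sum>p\<in>T. SUP i. f i p)"
    by (rule nonneg_infsum_complete) simp
  also have "\<dots> = (SUP T\<in>{T. finite T \<and> T \<subseteq> S}. SUP i. \<Sum>p\<in>T. f i p)"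
    using assms by (intro SUP_cong refl ennreal_SUP_sum[symmetric]) (auto simp: incseq_def le_fun_def)
  also have "\<dots> = (SUP i. SUP T\<in>{T. finite T \<and> T \<subseteq> S}. \<Sum>p\<in>T. f i p)"
    by (rule SUP_commute)
  also have "\<dots> = (SUP i. infsum (f i) S)"
    by (simp add: nonneg_infsum_complete)
  finally show ?thesis .
qed

lemma infsum_ennreal_cmult:
  fixes c :: real and g :: "'b \<Rightarrow> real"
  assumes "c \<ge> 0"
  shows "infsum (\<lambda>p. ennreal (c * g p)) S = ennreal c * infsum (\<lambda>p. ennreal (g p)) S"
proof -
  have "infsum (\<lambda>p. ennreal (c * g p)) S = (SUP T\<in>{T. finite T \<and> T \<subseteq> S}. ennreal c * (\<Sum>p\<in>T. ennreal (g p)))"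
    using assms by (simp add: nonneg_infsum_complete sum_distrib_left ennreal_mult')
  also have "\<dots> = ennreal c * infsum (\<lambda>p. ennreal (g p)) S"
    by (simp add: nonneg_infsum_complete SUP_mult_left_ennreal)
  finally show ?thesis .
qed

section \<open>Laplace functional of a Poisson point process\<close>

(* x \<mapsto> exp (- x) on [0, \<infinity>]; the sums over point configurations below may be infinite. *)
definition exp_neg_ennreal :: "ennreal \<Rightarrow> ennreal" where
  "exp_neg_ennreal x = (if x = \<top> then 0 else ennreal (exp (- enn2real x)))"

lemma borel_measurable_exp_neg_ennreal[measurable]: "exp_neg_ennreal \<in> borel_measurable borel"
  unfolding exp_neg_ennreal_def by measurable

lemma exp_neg_ennreal_le_1: "exp_neg_ennreal x \<le> 1"
  by (auto simp: exp_neg_ennreal_def)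

lemma exp_neg_ennreal_antimono: "x \<le> y \<Longrightarrow> exp_neg_ennreal y \<le> exp_neg_ennreal x"
  by (cases "y = \<top>") (auto simp: exp_neg_ennreal_def top_unique enn2real_mono less_top)

lemma exp_neg_ennreal_ennreal [simp]: "x \<ge> 0 \<Longrightarrow> exp_neg_ennreal (ennreal x) = ennreal (exp (- x))"
  by (simp add: exp_neg_ennreal_def)

lemma INF_exp_neg_ennreal_eq_0:
  fixes x :: "nat \<Rightarrow> ennreal"
  assumes "(SUP m. x m) = \<top>"
  shows "(INF m. exp_neg_ennreal (x m)) = 0"
proof -
  have bound: "(INF m. exp_neg_ennreal (x m)) \<le> ennreal (exp (- K))" for K :: real
  proof -
    have "ennreal (max 0 K) < (SUP m. x m)" unfolding assms by (rule ennreal_less_top)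
    then obtain m where m: "ennreal (max 0 K) < x m" by (auto simp: less_SUP_iff)
    have "exp_neg_ennreal (x m) \<le> ennreal (exp (- K))"
    proof (cases "x m = \<top>")
      case False
      then obtain y where y: "x m = ennreal y" "y \<ge> 0" by (cases "x m") auto
      have "K < y" using m y by (cases "K \<ge> 0") (auto simp: ennreal_less_iff)
      thus ?thesis using y by simp
    qed (simp add: exp_neg_ennreal_def)
    thus ?thesis by (rule order_trans[OF INF_lower[OF UNIV_I]])
  qed
  show ?thesis
  proof (rule ccontr)
    assume ne: "(INF m. exp_neg_ennreal (x m)) \<noteq> 0"
    have "(INF m. exp_neg_ennreal (x m)) \<le> exp_neg_ennreal (x 0)" by (rule INF_lower) simp
    hence "(INF m. exp_neg_ennreal (x m)) \<le> 1" using exp_neg_ennreal_le_1 order_trans by blast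
    then obtain r where r: "(INF m. exp_neg_ennreal (x m)) = ennreal r" "r > 0" using ne
      by (cases "INF m. exp_neg_ennreal (x m)") (auto simp: top_unique)
    have "ennreal r \<le> ennreal (exp (- (- ln (r / 2))))" using bound[of "- ln (r/2)"] r by simp
    hence "r \<le> r / 2" using r by (simp add: ennreal_le_iff)
    thus False using r by simp
  qed
qed

lemma exp_neg_ennreal_SUP:
  assumes inc: "incseq x"
  shows "exp_neg_ennreal (SUP m. x m) = (INF m. exp_neg_ennreal (x m))"
proof (cases "(SUP m. x m) = \<top>")
  case True
  hence "exp_neg_ennreal (SUP m. x m) = 0" by (simp add: exp_neg_ennreal_def)
  with INF_exp_neg_ennreal_eq_0[OF True] show ?thesis by simp
next
  case False
  then obtain L where L: "(SUP m. x m) = ennreal L" "L \<ge> 0" by (cases "SUP m. x m") auto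
  have fin: "x m \<noteq> \<top>" for m
    using SUP_upper[of m UNIV x] L by (auto simp: top_unique)
  have "x \<longlonglongrightarrow> ennreal L" using LIMSEQ_SUP[OF inc] L by simp
  from this L(2) have "(\<lambda>m. enn2real (x m)) \<longlonglongrightarrow> L" by (rule tendsto_enn2real)
  hence "(\<lambda>m. ennreal (exp (- enn2real (x m)))) \<longlonglongrightarrow> ennreal (exp (- L))"
    by (rule tendsto_ennrealI[OF tendsto_exp[OF tendsto_minus]])
  hence "(\<lambda>m. exp_neg_ennreal (x m)) \<longlonglongrightarrow> exp_neg_ennreal (SUP m. x m)"
    using fin L by (simp add: exp_neg_ennreal_def)
  moreover have "decseq (\<lambda>m. exp_neg_ennreal (x m))"
    using inc by (auto simp: incseq_def decseq_def intro: exp_neg_ennreal_antimono)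
  ultimately show ?thesis by (metis LIMSEQ_INF LIMSEQ_unique)
qed

lemma sets_ppp_space:
  "sets (ppp_space \<mu>) = sigma_sets UNIV {{S. finite (S \<inter> A) \<and> card (S \<inter> A) = k} | A k. A \<in> sets \<mu> \<and> emeasure \<mu> A < \<infinity>}"
  unfolding ppp_space_def by (intro sets_measure_of) auto

lemma space_ppp_space: "space (ppp_space \<mu>) = UNIV"
  unfolding ppp_space_def by (simp add: space_measure_of_conv)

lemma count_event_in_ppp_space:
  assumes "A \<in> sets \<mu>" "emeasure \<mu> A < \<infinity>"
  shows "{S. finite (S \<inter> A) \<and> card (S \<inter> A) = k} \<in> sets (ppp_space \<mu>)"
  unfolding sets_ppp_space using assms by (intro sigma_sets.Basic) blast

lemma ecard_Int_borel_measurable: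
  assumes "C \<in> sets \<mu>" "emeasure \<mu> C < \<infinity>"
  shows "(\<lambda>S. ecard (S \<inter> C)) \<in> borel_measurable (ppp_space \<mu>)"
proof -
  define k where "k S = (if finite (S \<inter> C) then Some (card (S \<inter> C)) else None)" for S
  define h where "h z = (case z of None \<Rightarrow> \<top> | Some n \<Rightarrow> (of_nat n :: ennreal))" for z
  have k: "k \<in> measurable (ppp_space \<mu>) (count_space UNIV)"
  proof (subst measurable_count_space_eq2_countable, safe)
    fix a :: "nat option"
    show "k -` {a} \<inter> space (ppp_space \<mu>) \<in> sets (ppp_space \<mu>)"
    proof (cases a)
      case (Some n)
      have "k -` {a} \<inter> space (ppp_space \<mu>) = {S. finite (S \<inter> C) \<and> card (S \<inter> C) = n}"
        by (auto simp: k_def Some space_ppp_space split: if_splits)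
      thus ?thesis using count_event_in_ppp_space[OF assms] by simp
    next
      case None
      have "k -` {a} \<inter> space (ppp_space \<mu>) = space (ppp_space \<mu>) - (\<Union>n. {S. finite (S \<inter> C) \<and> card (S \<inter> C) = n})"
        by (auto simp: k_def None space_ppp_space split: if_splits)
      thus ?thesis using count_event_in_ppp_space[OF assms] by auto
    qed
  qed auto
  have h: "h \<in> measurable (count_space UNIV) borel" by simp
  have "(\<lambda>S. h (k S)) \<in> borel_measurable (ppp_space \<mu>)" using measurable_comp[OF k h] by (simp add: comp_def)
  moreover have "(\<lambda>S. h (k S)) = (\<lambda>S. ecard (S \<inter> C))"
    by (auto simp: h_def k_def ecard_def fun_eq_iff)
  ultimately show ?thesis by simp
qed

lemma (in prob_space) poisson_point_process_countD:
  assumes P: "poisson_point_process \<mu> \<Phi>" and A: "A \<in> sets \<mu>" "emeasure \<mu> A < \<infinity>"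
  shows "(\<lambda>\<omega>. card (\<Phi> \<omega> \<inter> A)) \<in> measurable M (count_space UNIV)"
    and "AE \<omega> in M. finite (\<Phi> \<omega> \<inter> A)"
    and "\<And>k. prob {\<omega>\<in>space M. card (\<Phi> \<omega> \<inter> A) = k}
             = (enn2real (emeasure \<mu> A)) ^ k / fact k * exp (- enn2real (emeasure \<mu> A))"
proof -
  \<comment> \<open>measurability of a single count comes from the independence clause for a one-set family\<close>
  have "indep_vars (\<lambda>_. count_space UNIV) (\<lambda>i \<omega>. card (\<Phi> \<omega> \<inter> (\<lambda>_. A) i)) {..<(1::nat)}"
    using P A unfolding poisson_point_process_def by (auto simp: disjoint_family_on_def)
  thus "(\<lambda>\<omega>. card (\<Phi> \<omega> \<inter> A)) \<in> measurable M (count_space UNIV)"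
    unfolding indep_vars_def by auto
  show "AE \<omega> in M. finite (\<Phi> \<omega> \<inter> A)"
    using P A unfolding poisson_point_process_def by auto
  show "\<And>k. prob {\<omega>\<in>space M. card (\<Phi> \<omega> \<inter> A) = k}
             = (enn2real (emeasure \<mu> A)) ^ k / fact k * exp (- enn2real (emeasure \<mu> A))"
    using P A unfolding poisson_point_process_def by auto
qed

lemma (in prob_space) poisson_point_process_indep_counts:
  fixes n :: nat
  assumes "poisson_point_process \<mu> \<Phi>"
    and "\<And>j. j < n \<Longrightarrow> A j \<in> sets \<mu> \<and> emeasure \<mu> (A j) < \<infinity>" and "disjoint_family_on A {..<n}"
  shows "indep_vars (\<lambda>_. count_space UNIV) (\<lambda>j \<omega>. card (\<Phi> \<omega> \<inter> A j)) {..<n}"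
proof -
  have all: "\<forall>(n::nat) A. (\<forall>i<n. A i \<in> sets \<mu> \<and> emeasure \<mu> (A i) < \<infinity>) \<and> disjoint_family_on A {..<n}
          \<longrightarrow> indep_vars (\<lambda>_. count_space UNIV) (\<lambda>i \<omega>. card (\<Phi> \<omega> \<inter> A i)) {..<n}"
    using assms(1) unfolding poisson_point_process_def by (rule conjunct2[THEN conjunct2])
  have "(\<forall>i<n. A i \<in> sets \<mu> \<and> emeasure \<mu> (A i) < \<infinity>) \<and> disjoint_family_on A {..<n}"
    using assms(2,3) by simp
  thus ?thesis by (rule mp[OF spec[OF spec[OF all, of n], of A]])
qed

lemma (in prob_space) nn_integral_exp_poisson:
  fixes N :: "'a \<Rightarrow> nat"
  assumes N: "N \<in> measurable M (count_space UNIV)"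
    and P: "\<And>k. prob {\<omega>\<in>space M. N \<omega> = k} = m ^ k / fact k * exp (- m)" and m: "m \<ge> 0"
  shows "(\<integral>\<^sup>+\<omega>. ennreal (exp (- (c * real (N \<omega>)))) \<partial>M) = ennreal (exp (- (m * (1 - exp (- c)))))"
proof -
  define A where "A k = {\<omega>\<in>space M. N \<omega> = k}" for k
  have A[measurable]: "A k \<in> sets M" for k
  proof -
    have "A k = N -` {k} \<inter> space M" by (auto simp: A_def)
    thus ?thesis using measurable_sets[OF N, of "{k}"] by simp
  qed
  have "(\<integral>\<^sup>+\<omega>. ennreal (exp (- (c * real (N \<omega>)))) \<partial>M)
      = (\<integral>\<^sup>+\<omega>. (\<Sum>k. ennreal (exp (- c * real k)) * indicator (A k) \<omega>) \<partial>M)"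
  proof (intro nn_integral_cong)
    fix \<omega> assume "\<omega> \<in> space M"
    hence "\<omega> \<in> A (N \<omega>)" by (simp add: A_def)
    moreover have "disjoint_family A" by (auto simp: disjoint_family_on_def A_def)
    ultimately show "ennreal (exp (- (c * real (N \<omega>)))) = (\<Sum>k. ennreal (exp (- c * real k)) * indicator (A k) \<omega>)"
      by (simp add: suminf_cmult_indicator)
  qed
  also have "\<dots> = (\<Sum>k. \<integral>\<^sup>+\<omega>. ennreal (exp (- c * real k)) * indicator (A k) \<omega> \<partial>M)"
    by (intro nn_integral_suminf) measurable
  also have "\<dots> = (\<Sum>k. ennreal (exp (- m) * ((m * exp (- c)) ^ k / fact k)))"
  proof (intro suminf_cong)
    fix k
    have "(\<integral>\<^sup>+\<omega>. ennreal (exp (- c * real k)) * indicator (A k) \<omega> \<partial>M) = ennreal (exp (- c * real k)) * emeasure M (A k)"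
      by (intro nn_integral_cmult_indicator) measurable
    also have "\<dots> = ennreal (exp (- c * real k)) * ennreal (m ^ k / fact k * exp (- m))"
      by (simp add: emeasure_eq_measure P[folded A_def])
    also have "\<dots> = ennreal (exp (- m) * ((m * exp (- c)) ^ k / fact k))"
      using m by (simp add: ennreal_mult'[symmetric] power_mult_distrib exp_of_nat_mult[symmetric] mult_ac)
    finally show "(\<integral>\<^sup>+\<omega>. ennreal (exp (- c * real k)) * indicator (A k) \<omega> \<partial>M) = ennreal (exp (- m) * ((m * exp (- c)) ^ k / fact k))" .
  qed
  also have "\<dots> = ennreal (exp (- m) * exp (m * exp (- c)))"
  proof (rule suminf_ennreal_eq)
    show "0 \<le> exp (- m) * ((m * exp (- c)) ^ k / fact k)" for k using m by simp
    have "(\<lambda>k. (m * exp (- c)) ^ k /\<^sub>R fact k) sums exp (m * exp (- c))" by (rule exp_converges)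
    hence "(\<lambda>k. (m * exp (- c)) ^ k / fact k) sums exp (m * exp (- c))" by (simp add: divide_inverse mult.commute)
    thus "(\<lambda>k. exp (- m) * ((m * exp (- c)) ^ k / fact k)) sums (exp (- m) * exp (m * exp (- c)))"
      by (rule sums_mult)
  qed
  also have "exp (- m) * exp (m * exp (- c)) = exp (- (m * (1 - exp (- c))))"
    by (simp add: exp_add[symmetric] algebra_simps)
  finally show ?thesis .
qed

lemma ennreal_exp_minus_sum:
  assumes "finite J"
  shows "ennreal (exp (- (\<Sum>j\<in>J. f j))) = (\<Prod>j\<in>J. ennreal (exp (- f j)))"
proof -
  have "exp (- (\<Sum>j\<in>J. f j)) = (\<Prod>j\<in>J. exp (- f j))"
    by (simp only: sum_negf[symmetric] exp_sum[OF assms])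
  thus ?thesis by (simp add: prod_ennreal)
qed

lemma (in prob_space) nn_integral_exp_weighted_counts:
  fixes n :: nat
  assumes PPP: "poisson_point_process \<mu> \<Phi>"
    and A: "\<And>j. j < n \<Longrightarrow> A j \<in> sets \<mu> \<and> emeasure \<mu> (A j) < \<infinity>"
    and disj: "disjoint_family_on A {..<n}"
  shows "(\<integral>\<^sup>+\<omega>. ennreal (exp (- (\<Sum>j<n. c j * real (card (\<Phi> \<omega> \<inter> A j))))) \<partial>M)
       = ennreal (exp (- (\<Sum>j<n. enn2real (emeasure \<mu> (A j)) * (1 - exp (- c j)))))"
proof -
  define X where "X j \<omega> = ennreal (exp (- (c j * real (card (\<Phi> \<omega> \<inter> A j)))))" for j \<omega>
  have indepX: "indep_vars (\<lambda>_. borel) X {..<n}"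
    unfolding X_def by (rule indep_vars_compose2[OF poisson_point_process_indep_counts[OF PPP A disj]]) auto
  have "(\<integral>\<^sup>+\<omega>. ennreal (exp (- (\<Sum>j<n. c j * real (card (\<Phi> \<omega> \<inter> A j))))) \<partial>M)
      = (\<integral>\<^sup>+\<omega>. (\<Prod>j<n. X j \<omega>) \<partial>M)"
    unfolding X_def by (intro nn_integral_cong ennreal_exp_minus_sum) simp
  also have "\<dots> = (\<Prod>j<n. \<integral>\<^sup>+\<omega>. X j \<omega> \<partial>M)"
    by (rule indep_vars_nn_integral) (use indepX in auto)
  also have "\<dots> = (\<Prod>j<n. ennreal (exp (- (enn2real (emeasure \<mu> (A j)) * (1 - exp (- c j))))))"
  proof (intro prod.cong refl)
    fix j assume "j \<in> {..<n}"
    thus "(\<integral>\<^sup>+\<omega>. X j \<omega> \<partial>M) = ennreal (exp (- (enn2real (emeasure \<mu> (A j)) * (1 - exp (- c j)))))"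
      unfolding X_def using A[of j]
      by (intro nn_integral_exp_poisson poisson_point_process_countD(1,3)[OF PPP]) auto
  qed
  also have "\<dots> = ennreal (exp (- (\<Sum>j<n. enn2real (emeasure \<mu> (A j)) * (1 - exp (- c j)))))"
    by (intro ennreal_exp_minus_sum[symmetric]) simp
  finally show ?thesis .
qed

lemma nn_integral_simple_level_sets:
  fixes \<mu> :: "'b measure" and s :: "'b \<Rightarrow> ennreal"
  assumes sp: "space \<mu> = UNIV" and fin: "finite (range s)" and st: "\<And>p. s p < \<top>"
    and C: "\<And>v. v \<in> range s - {0} \<Longrightarrow> {p. s p = v} \<in> sets \<mu> \<and> emeasure \<mu> {p. s p = v} < \<infinity>"
  shows "(\<integral>\<^sup>+p. ennreal (1 - exp (- enn2real (s p))) \<partial>\<mu>)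
       = ennreal (\<Sum>v\<in>range s - {0}. enn2real (emeasure \<mu> {p. s p = v}) * (1 - exp (- enn2real v)))"
proof -
  have "(\<integral>\<^sup>+p. ennreal (1 - exp (- enn2real (s p))) \<partial>\<mu>)
      = (\<integral>\<^sup>+p. (\<Sum>v\<in>range s - {0}. ennreal (1 - exp (- enn2real v)) * indicator {p. s p = v} p) \<partial>\<mu>)"
  proof (intro nn_integral_cong)
    fix p
    show "ennreal (1 - exp (- enn2real (s p))) = (\<Sum>v\<in>range s - {0}. ennreal (1 - exp (- enn2real v)) * indicator {p. s p = v} p)"
    proof (cases "s p = 0")
      case True
      have "(\<Sum>v\<in>range s - {0}. ennreal (1 - exp (- enn2real v)) * indicator {p. s p = v} p) = 0"
        using True by (intro sum.neutral) (auto simp: indicator_def)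
      thus ?thesis using True by simp
    next
      case False
      have "(\<Sum>v\<in>range s - {0}. ennreal (1 - exp (- enn2real v)) * indicator {p. s p = v} p)
          = ennreal (1 - exp (- enn2real (s p))) * indicator {q. s q = s p} p"
        using fin False by (intro sum.remove[THEN trans]) (auto intro!: sum.neutral simp: indicator_def)
      thus ?thesis by simp
    qed
  qed
  also have "\<dots> = (\<Sum>v\<in>range s - {0}. \<integral>\<^sup>+p. ennreal (1 - exp (- enn2real v)) * indicator {p. s p = v} p \<partial>\<mu>)"
  proof (rule nn_integral_sum)
    fix v assume v: "v \<in> range s - {0}"
    have [measurable]: "{p. s p = v} \<in> sets \<mu>" using C[OF v] by auto
    show "(\<lambda>p. ennreal (1 - exp (- enn2real v)) * indicator {p. s p = v} p) \<in> borel_measurable \<mu>" by measurable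
  qed
  also have "\<dots> = (\<Sum>v\<in>range s - {0}. ennreal (1 - exp (- enn2real v)) * emeasure \<mu> {p. s p = v})"
    using C by (intro sum.cong refl nn_integral_cmult_indicator) auto
  also have "\<dots> = (\<Sum>v\<in>range s - {0}. ennreal (enn2real (emeasure \<mu> {p. s p = v}) * (1 - exp (- enn2real v))))"
  proof (intro sum.cong refl)
    fix v assume v: "v \<in> range s - {0}"
    have "emeasure \<mu> {p. s p = v} = ennreal (enn2real (emeasure \<mu> {p. s p = v}))"
      using C[OF v] by (simp add: less_top ennreal_enn2real)
    thus "ennreal (1 - exp (- enn2real v)) * emeasure \<mu> {p. s p = v} = ennreal (enn2real (emeasure \<mu> {p. s p = v}) * (1 - exp (- enn2real v)))"
      by (metis (no_types, lifting) enn2real_nonneg ennreal_mult' mult.commute)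
  qed
  also have "\<dots> = ennreal (\<Sum>v\<in>range s - {0}. enn2real (emeasure \<mu> {p. s p = v}) * (1 - exp (- enn2real v)))"
    by (intro sum_ennreal) simp
  finally show ?thesis .
qed

lemma infsum_eq_weighted_level_counts:
  fixes s :: "'b \<Rightarrow> ennreal"
  assumes fin: "finite (range s)" and st: "\<And>p. s p < \<top>" and e: "bij_betw e {..<n} (range s - {0})"
    and S: "\<And>j. j \<in> {..<n} \<Longrightarrow> finite (S \<inter> {p. s p = e j})"
  shows "infsum s S = ennreal (\<Sum>j<n. enn2real (e j) * real (card (S \<inter> {p. s p = e j})))"
proof -
  have e_fin: "e j = ennreal (enn2real (e j))" if j: "j \<in> {..<n}" for j
  proof -
    obtain p where "e j = s p" using e j by (auto simp: bij_betw_def)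
    thus ?thesis using st[of p] by (simp add: less_top)
  qed
  have "infsum s S = (\<Sum>v\<in>range s - {0}. v * ecard (S \<inter> {p. s p = v}))"
    by (rule infsum_eq_sum_level_sets[OF fin])
  also have "\<dots> = (\<Sum>j<n. e j * ecard (S \<inter> {p. s p = e j}))"
    using e by (rule sum.reindex_bij_betw[symmetric])
  also have "\<dots> = (\<Sum>j<n. ennreal (enn2real (e j) * real (card (S \<inter> {p. s p = e j}))))"
    using S e_fin by (intro sum.cong refl) (metis ecard_def ennreal_mult' ennreal_of_nat_eq_real_of_nat enn2real_nonneg)
  also have "\<dots> = ennreal (\<Sum>j<n. enn2real (e j) * real (card (S \<inter> {p. s p = e j})))"
    by (intro sum_ennreal) simp
  finally show ?thesis .
qed

lemma (in prob_space) poisson_point_process_laplace_simple: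
  fixes s :: "'b \<Rightarrow> ennreal"
  assumes PPP: "poisson_point_process \<mu> \<Phi>" and sp: "space \<mu> = UNIV"
    and fin: "finite (range s)" and st: "\<And>p. s p < \<top>"
    and lev: "\<And>v. {p. s p = v} \<in> sets \<mu>" and lev_fin: "\<And>v. v \<noteq> 0 \<Longrightarrow> emeasure \<mu> {p. s p = v} < \<infinity>"
  shows "(\<integral>\<^sup>+\<omega>. exp_neg_ennreal (infsum s (\<Phi> \<omega>)) \<partial>M)
       = exp_neg_ennreal (\<integral>\<^sup>+p. ennreal (1 - exp (- enn2real (s p))) \<partial>\<mu>)"
proof -
  define V where "V = range s - {0}"
  obtain e where e: "bij_betw e {..<card V} V"
    using ex_bij_betw_nat_finite[of V] fin by (auto simp: V_def atLeast0LessThan)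
  define A where "A j = {p. s p = e j}" for j
  define c where "c j = enn2real (e j)" for j
  have eV: "j < card V \<Longrightarrow> e j \<in> V" for j using e by (auto simp: bij_betw_def)
  have A: "j < card V \<Longrightarrow> A j \<in> sets \<mu> \<and> emeasure \<mu> (A j) < \<infinity>" for j
    using eV lev lev_fin by (auto simp: A_def V_def)
  have disj: "disjoint_family_on A {..<card V}"
    using e by (auto simp: disjoint_family_on_def A_def bij_betw_def inj_on_def)
  have "AE \<omega> in M. \<forall>j\<in>{..<card V}. finite (\<Phi> \<omega> \<inter> A j)"
    using A by (intro AE_finite_allI poisson_point_process_countD(2)[OF PPP]) auto
  hence "AE \<omega> in M. infsum s (\<Phi> \<omega>) = ennreal (\<Sum>j<card V. c j * real (card (\<Phi> \<omega> \<inter> A j)))"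
  proof eventually_elim
    case (elim \<omega>)
    thus ?case
      using infsum_eq_weighted_level_counts[OF fin st e[unfolded V_def]] by (simp add: A_def c_def V_def)
  qed
  hence "(\<integral>\<^sup>+\<omega>. exp_neg_ennreal (infsum s (\<Phi> \<omega>)) \<partial>M)
      = (\<integral>\<^sup>+\<omega>. ennreal (exp (- (\<Sum>j<card V. c j * real (card (\<Phi> \<omega> \<inter> A j))))) \<partial>M)"
    by (intro nn_integral_cong_AE) (auto elim!: eventually_mono simp: c_def sum_nonneg)
  also have "\<dots> = ennreal (exp (- (\<Sum>j<card V. enn2real (emeasure \<mu> (A j)) * (1 - exp (- c j)))))"
    using A disj by (rule nn_integral_exp_weighted_counts[OF PPP])
  also have "(\<Sum>j<card V. enn2real (emeasure \<mu> (A j)) * (1 - exp (- c j)))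
      = (\<Sum>v\<in>V. enn2real (emeasure \<mu> {p. s p = v}) * (1 - exp (- enn2real v)))"
    unfolding A_def c_def using e by (rule sum.reindex_bij_betw)
  also have "ennreal (exp (- \<dots>)) = exp_neg_ennreal (\<integral>\<^sup>+p. ennreal (1 - exp (- enn2real (s p))) \<partial>\<mu>)"
  proof -
    have "(\<Sum>v\<in>V. enn2real (emeasure \<mu> {p. s p = v}) * (1 - exp (- enn2real v))) \<ge> 0"
      by (intro sum_nonneg mult_nonneg_nonneg) auto
    moreover have "(\<integral>\<^sup>+p. ennreal (1 - exp (- enn2real (s p))) \<partial>\<mu>)
        = ennreal (\<Sum>v\<in>V. enn2real (emeasure \<mu> {p. s p = v}) * (1 - exp (- enn2real v)))"
      unfolding V_def using lev lev_fin by (intro nn_integral_simple_level_sets[OF sp fin st]) auto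
    ultimately show ?thesis by simp
  qed
  finally show ?thesis .
qed

lemma simple_approx_finite_level_sets:
  fixes g :: "'b \<Rightarrow> real"
  assumes sp: "space \<mu> = UNIV" and g[measurable]: "g \<in> borel_measurable \<mu>" and g0: "\<And>p. g p \<ge> 0"
    and L: "(\<integral>\<^sup>+p. ennreal (1 - exp (- g p)) \<partial>\<mu>) < \<top>"
  obtains s :: "nat \<Rightarrow> 'b \<Rightarrow> ennreal"
  where "incseq s" "\<And>i. finite (range (s i))" "\<And>i p. s i p < \<top>" "\<And>i v. {p. s i p = v} \<in> sets \<mu>"
    "\<And>i v. v \<noteq> 0 \<Longrightarrow> emeasure \<mu> {p. s i p = v} < \<infinity>" "\<And>p. (SUP i. s i p) = ennreal (g p)" "\<And>i. s i \<in> borel_measurable \<mu>"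
proof -
  \<comment> \<open>Markov's inequality for 1 - exp (- g)\<close>
  have superlevel: "emeasure \<mu> {p. a \<le> g p} < \<infinity>" if a: "a > 0" for a
  proof -
    have [measurable]: "{p. a \<le> g p} \<in> sets \<mu>"
      using measurable_sets[OF g, of "{a..}"] sp by (simp add: vimage_def)
    have "ennreal (1 - exp (- a)) * emeasure \<mu> {p. a \<le> g p}
        = (\<integral>\<^sup>+p. ennreal (1 - exp (- a)) * indicator {p. a \<le> g p} p \<partial>\<mu>)"
      by (rule nn_integral_cmult_indicator[symmetric]) simp
    also have "\<dots> \<le> (\<integral>\<^sup>+p. ennreal (1 - exp (- g p)) \<partial>\<mu>)"
      by (intro nn_integral_mono) (auto simp: indicator_def intro!: ennreal_leI)
    finally have "ennreal (1 - exp (- a)) * emeasure \<mu> {p. a \<le> g p} < \<top>" using L by order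
    moreover have "1 - exp (- a) > 0" using a by simp
    ultimately show ?thesis by (auto simp: ennreal_mult_less_top)
  qed
  obtain s where s_simple: "\<And>i. simple_function \<mu> (s i)" and s_inc: "incseq s"
    and s_fin: "\<And>i p. s i p < \<top>" and s_sup: "\<And>p. (SUP i. s i p) = ennreal (g p)"
    using borel_measurable_implies_simple_function_sequence'[of "\<lambda>p. ennreal (g p)" \<mu>] by auto
  have s_rng: "finite (range (s i))" for i using simple_functionD(1)[OF s_simple[of i]] sp by simp
  have s_sets: "{p. s i p = v} \<in> sets \<mu>" for i v
    using simple_functionD(2)[OF s_simple[of i], of "{v}"] sp by (simp add: vimage_def)
  have s_le: "s i p \<le> ennreal (g p)" for i p using SUP_upper[of i UNIV "\<lambda>i. s i p"] s_sup[of p] by simp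
  have level_fin: "emeasure \<mu> {p. s i p = v} < \<infinity>" if v: "v \<noteq> 0" for i v
  proof (cases "v \<in> range (s i)")
    case True
    have v0: "0 < enn2real v" using True v s_fin by (auto simp: enn2real_positive_iff zero_less_iff_neq_zero)
    have "{p. s i p = v} \<subseteq> {p. enn2real v \<le> g p}"
    proof
      fix p assume "p \<in> {p. s i p = v}"
      hence "enn2real v \<le> enn2real (ennreal (g p))" using s_le[of i p] by (intro enn2real_mono) auto
      thus "p \<in> {p. enn2real v \<le> g p}" using g0[of p] by simp
    qed
    hence "emeasure \<mu> {p. s i p = v} \<le> emeasure \<mu> {p. enn2real v \<le> g p}"
      using measurable_sets[OF g, of "{enn2real v..}"] sp by (intro emeasure_mono) (auto simp: vimage_def)
    also have "\<dots> < \<infinity>" using superlevel[OF v0] .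
    finally show ?thesis .
  next
    case False
    hence "{p. s i p = v} = {}" by auto
    thus ?thesis by simp
  qed
  show thesis using s_inc s_rng s_fin s_sets level_fin s_sup borel_measurable_simple_function[OF s_simple]
    by (rule that)
qed

lemma infsum_simple_borel_measurable_ppp_space:
  fixes s :: "'b \<Rightarrow> ennreal"
  assumes "finite (range s)" "\<And>v. {p. s p = v} \<in> sets \<mu>" "\<And>v. v \<noteq> 0 \<Longrightarrow> emeasure \<mu> {p. s p = v} < \<infinity>"
  shows "(\<lambda>S. infsum s S) \<in> borel_measurable (ppp_space \<mu>)"
  unfolding infsum_eq_sum_level_sets[OF assms(1)] using assms(2,3)
  by (intro borel_measurable_sum borel_measurable_times_ennreal borel_measurable_const
      ecard_Int_borel_measurable) auto

lemma infsum_borel_measurable_ppp_space: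
  fixes g :: "'b \<Rightarrow> real"
  assumes "space \<mu> = UNIV" "g \<in> borel_measurable \<mu>" "\<And>p. g p \<ge> 0"
    and "(\<integral>\<^sup>+p. ennreal (1 - exp (- g p)) \<partial>\<mu>) < \<top>"
  shows "(\<lambda>S. infsum (\<lambda>p. ennreal (g p)) S) \<in> borel_measurable (ppp_space \<mu>)"
proof -
  obtain s where s: "incseq s" "\<And>i. finite (range (s i))" "\<And>i v. {p. s i p = v} \<in> sets \<mu>"
    "\<And>i v. v \<noteq> 0 \<Longrightarrow> emeasure \<mu> {p. s i p = v} < \<infinity>" "\<And>p. (SUP i. s i p) = ennreal (g p)"
    using simple_approx_finite_level_sets[OF assms] by metis
  have "(\<lambda>S. infsum (\<lambda>p. ennreal (g p)) S) = (\<lambda>S. SUP i. infsum (s i) S)"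
    using infsum_SUP_ennreal[OF s(1)] by (simp add: s(5)[symmetric])
  moreover have "(\<lambda>S. infsum (s i) S) \<in> borel_measurable (ppp_space \<mu>)" for i
    using s by (intro infsum_simple_borel_measurable_ppp_space) auto
  ultimately show ?thesis by simp
qed

theorem (in prob_space) poisson_point_process_laplace_functional:
  fixes \<mu> :: "'b measure" and \<Phi> :: "'a \<Rightarrow> 'b set" and g :: "'b \<Rightarrow> real"
  assumes PPP: "poisson_point_process \<mu> \<Phi>" and sp: "space \<mu> = UNIV"
    and g: "g \<in> borel_measurable \<mu>" and g0: "\<And>p. g p \<ge> 0"
    and L: "(\<integral>\<^sup>+p. ennreal (1 - exp (- g p)) \<partial>\<mu>) < \<top>"
  shows "(\<integral>\<^sup>+\<omega>. exp_neg_ennreal (infsum (\<lambda>p. ennreal (g p)) (\<Phi> \<omega>)) \<partial>M)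
       = exp_neg_ennreal (\<integral>\<^sup>+p. ennreal (1 - exp (- g p)) \<partial>\<mu>)"
proof -
  obtain s where s_inc: "incseq s" and s_rng: "\<And>i. finite (range (s i))" and s_fin: "\<And>i p. s i p < \<top>"
    and s_sets: "\<And>i v. {p. s i p = v} \<in> sets \<mu>" and s_lev: "\<And>i v. v \<noteq> 0 \<Longrightarrow> emeasure \<mu> {p. s i p = v} < \<infinity>"
    and s_sup: "\<And>p. (SUP i. s i p) = ennreal (g p)" and [measurable]: "\<And>i. s i \<in> borel_measurable \<mu>"
    using simple_approx_finite_level_sets[OF sp g g0 L] by metis
  have [measurable]: "\<Phi> \<in> measurable M (ppp_space \<mu>)"
    using PPP unfolding poisson_point_process_def by simp
  have [measurable]: "(\<lambda>S. infsum (s i) S) \<in> borel_measurable (ppp_space \<mu>)" for i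
    using s_rng s_sets s_lev by (rule infsum_simple_borel_measurable_ppp_space)
  have sum_inc: "incseq (\<lambda>i. infsum (s i) S)" for S
    using s_inc unfolding incseq_def nonneg_infsum_complete[OF zero_le]
    by (auto intro!: SUP_mono' sum_mono simp: le_fun_def)
  have pt_inc: "incseq (\<lambda>i. ennreal (1 - exp (- enn2real (s i p))))" for p
    using s_inc s_fin by (auto intro!: ennreal_leI simp: incseq_def le_fun_def enn2real_mono)
  have pt_sup: "(SUP i. ennreal (1 - exp (- enn2real (s i p)))) = ennreal (1 - exp (- g p))" for p
  proof -
    have "(\<lambda>i. s i p) \<longlonglongrightarrow> ennreal (g p)"
      using LIMSEQ_SUP[of "\<lambda>i. s i p"] s_sup[of p] s_inc by (simp add: incseq_def le_fun_def)
    from this g0[of p] have "(\<lambda>i. enn2real (s i p)) \<longlonglongrightarrow> g p" by (rule tendsto_enn2real)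
    hence "(\<lambda>i. ennreal (1 - exp (- enn2real (s i p)))) \<longlonglongrightarrow> ennreal (1 - exp (- g p))"
      by (rule tendsto_ennrealI[OF tendsto_diff[OF tendsto_const tendsto_exp[OF tendsto_minus]]])
    with LIMSEQ_SUP[OF pt_inc[of p]] show ?thesis by (rule LIMSEQ_unique)
  qed
  have "(\<integral>\<^sup>+\<omega>. exp_neg_ennreal (infsum (\<lambda>p. ennreal (g p)) (\<Phi> \<omega>)) \<partial>M)
      = (\<integral>\<^sup>+\<omega>. (INF i. exp_neg_ennreal (infsum (s i) (\<Phi> \<omega>))) \<partial>M)"
    by (simp add: s_sup[symmetric] infsum_SUP_ennreal[OF s_inc] exp_neg_ennreal_SUP[OF sum_inc])
  also have "\<dots> = (INF i. \<integral>\<^sup>+\<omega>. exp_neg_ennreal (infsum (s i) (\<Phi> \<omega>)) \<partial>M)"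
  proof (rule nn_integral_monotone_convergence_INF_decseq)
    show "decseq (\<lambda>i \<omega>. exp_neg_ennreal (infsum (s i) (\<Phi> \<omega>)))"
    proof (rule decseq_SucI, rule le_funI)
      fix i \<omega>
      show "exp_neg_ennreal (infsum (s (Suc i)) (\<Phi> \<omega>)) \<le> exp_neg_ennreal (infsum (s i) (\<Phi> \<omega>))"
        using sum_inc[of "\<Phi> \<omega>"] by (intro exp_neg_ennreal_antimono) (simp add: incseq_Suc_iff)
    qed
    have "(\<integral>\<^sup>+\<omega>. exp_neg_ennreal (infsum (s 0) (\<Phi> \<omega>)) \<partial>M) \<le> (\<integral>\<^sup>+\<omega>. 1 \<partial>M)"
      by (intro nn_integral_mono exp_neg_ennreal_le_1)
    thus "(\<integral>\<^sup>+\<omega>. exp_neg_ennreal (infsum (s 0) (\<Phi> \<omega>)) \<partial>M) < \<infinity>"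
      by (simp add: emeasure_space_1 le_less_trans)
  qed measurable
  also have "\<dots> = (INF i. exp_neg_ennreal (\<integral>\<^sup>+p. ennreal (1 - exp (- enn2real (s i p))) \<partial>\<mu>))"
    using s_rng s_fin s_sets s_lev by (simp add: poisson_point_process_laplace_simple[OF PPP sp])
  also have "\<dots> = exp_neg_ennreal (SUP i. \<integral>\<^sup>+p. ennreal (1 - exp (- enn2real (s i p))) \<partial>\<mu>)"
    using pt_inc by (intro exp_neg_ennreal_SUP[symmetric]) (auto simp: incseq_def intro!: nn_integral_mono)
  also have "(SUP i. \<integral>\<^sup>+p. ennreal (1 - exp (- enn2real (s i p))) \<partial>\<mu>) = (\<integral>\<^sup>+p. ennreal (1 - exp (- g p)) \<partial>\<mu>)"
    using pt_inc by (subst nn_integral_monotone_convergence_SUP[symmetric])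
      (auto simp: pt_sup incseq_def le_fun_def)
  finally show ?thesis .
qed

section \<open>The interference field\<close>

definition qconst :: "real \<Rightarrow> real \<Rightarrow> real \<Rightarrow> real \<Rightarrow> real \<Rightarrow> real" where
  "qconst \<alpha> \<nu> Qbar lmin lmax = Qbar / Gamma (1 + \<alpha> * \<nu> / 2) *
     ((pi * lmin) powr (\<alpha> * \<nu> / 2) * (if \<nu> \<ge> 0 then 1 else 0)
      + (pi * lmax) powr (\<alpha> * \<nu> / 2) * (if - 2 / \<alpha> < \<nu> \<and> \<nu> < 0 then 1 else 0))"

lemma Qpow_eq: "Qpow \<alpha> \<nu> Qbar lmin lmax r = qconst \<alpha> \<nu> Qbar lmin lmax * r powr (\<alpha> * \<nu>)"
  unfolding Qpow_def qconst_def by (simp add: field_simps)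

lemma Qpow_measurable [measurable]: "Qpow \<alpha> \<nu> Qbar lmin lmax \<in> borel_measurable borel"
  unfolding Qpow_eq[abs_def] by measurable

lemma qconst_pos:
  assumes "\<alpha> > 2" "\<nu> > - 2 / \<alpha>" "Qbar > 0" "lmin > 0" "lmax > 0"
  shows "qconst \<alpha> \<nu> Qbar lmin lmax > 0"
proof -
  have "\<alpha> * \<nu> > -2" using assms by (simp add: field_simps)
  hence G: "Gamma (1 + \<alpha> * \<nu> / 2) > 0" by (intro Gamma_real_pos) simp
  have "(pi * lmin) powr (\<alpha> * \<nu> / 2) * (if \<nu> \<ge> 0 then 1 else 0)
      + (pi * lmax) powr (\<alpha> * \<nu> / 2) * (if - 2 / \<alpha> < \<nu> \<and> \<nu> < 0 then 1 else 0) > 0"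
    using assms by (cases "\<nu> \<ge> 0") auto
  thus ?thesis using G assms unfolding qconst_def by simp
qed

lemma Qpow_pos:
  assumes "\<alpha> > 2" "\<nu> > - 2 / \<alpha>" "Qbar > 0" "lmin > 0" "lmax > 0" "r > 0"
  shows "Qpow \<alpha> \<nu> Qbar lmin lmax r > 0"
  using qconst_pos[OF assms(1-5)] assms(6) by (simp add: Qpow_eq)

lemma threshold_over_received_power_powr:
  fixes r c \<theta> \<alpha> \<nu> :: real
  assumes r: "r > 0" and c: "c > 0" and th: "\<theta> > 0" and al: "\<alpha> > 0"
  shows "(\<theta> / (c * r powr (\<alpha> * \<nu>) * r powr (- \<alpha>))) powr (2 / \<alpha>) = (\<theta> / c) powr (2 / \<alpha>) * (r\<^sup>2) powr (1 - \<nu>)"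
proof -
  have eq: "\<theta> / (c * r powr (\<alpha> * \<nu>) * r powr (- \<alpha>)) = (\<theta> / c) * r powr (\<alpha> - \<alpha> * \<nu>)"
    using r c by (simp add: powr_minus powr_diff field_simps)
  have "((\<theta> / c) * r powr (\<alpha> - \<alpha> * \<nu>)) powr (2 / \<alpha>) = (\<theta> / c) powr (2 / \<alpha>) * (r powr (\<alpha> - \<alpha> * \<nu>)) powr (2 / \<alpha>)"
    using r c th by (intro powr_mult)
  also have "\<dots> = (\<theta> / c) powr (2 / \<alpha>) * r powr ((\<alpha> - \<alpha> * \<nu>) * (2 / \<alpha>))"
    by (simp only: powr_powr)
  also have "(\<alpha> - \<alpha> * \<nu>) * (2 / \<alpha>) = 2 * (1 - \<nu>)" using al by (simp add: field_simps)
  also have "r powr (2 * (1 - \<nu>)) = (r powr 2) powr (1 - \<nu>)"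
    by (simp add: powr_powr)
  also have "r powr 2 = r\<^sup>2"
    using r by (simp add: powr_realpow)
  finally show ?thesis unfolding eq .
qed

lemma nn_integral_Q_distr_powr:
  assumes al: "\<alpha> > 2" and nu: "\<nu> > - 2 / \<alpha>" and Q: "Qbar > 0" "lmin > 0" "lmax > 0" and lb: "lb > 0"
  shows "(\<integral>\<^sup>+q. ennreal ((max 0 q) powr (2 / \<alpha>)) \<partial>Q_distr \<alpha> \<nu> Qbar lmin lmax lb)
       = ennreal (qconst \<alpha> \<nu> Qbar lmin lmax powr (2 / \<alpha>) * ((pi * lb) powr (- \<nu>) * Gamma (1 + \<nu>)))"
proof -
  define c where "c = qconst \<alpha> \<nu> Qbar lmin lmax"
  have c: "c > 0" unfolding c_def using qconst_pos al nu Q by blast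
  have "2 / \<alpha> < 1" using al by simp
  hence nu1: "\<nu> > -1" using nu by linarith
  have "(\<integral>\<^sup>+q. ennreal ((max 0 q) powr (2 / \<alpha>)) \<partial>Q_distr \<alpha> \<nu> Qbar lmin lmax lb)
      = (\<integral>\<^sup>+s. ennreal (exponential_density (pi * lb) s)
            * ennreal ((max 0 (Qpow \<alpha> \<nu> Qbar lmin lmax (sqrt s))) powr (2 / \<alpha>)) \<partial>lborel)"
    unfolding Q_distr_def exp_distr_def
    by (subst nn_integral_distr, simp_all, rule nn_integral_density) measurable
  also have "\<dots> = (\<integral>\<^sup>+s. ennreal (c powr (2 / \<alpha>)) * (ennreal (exponential_density (pi * lb) s) * ennreal (s powr \<nu>)) \<partial>lborel)"
  proof (rule nn_integral_cong)
    fix s :: real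
    show "ennreal (exponential_density (pi * lb) s) * ennreal ((max 0 (Qpow \<alpha> \<nu> Qbar lmin lmax (sqrt s))) powr (2 / \<alpha>))
        = ennreal (c powr (2 / \<alpha>)) * (ennreal (exponential_density (pi * lb) s) * ennreal (s powr \<nu>))"
    proof (cases "s < 0")
      case False
      have "sqrt s powr (\<alpha> * \<nu>) = s powr (\<alpha> * \<nu> / 2)"
        using False by (simp add: powr_half_sqrt[symmetric] powr_powr)
      hence "Qpow \<alpha> \<nu> Qbar lmin lmax (sqrt s) = c * s powr (\<alpha> * \<nu> / 2)" by (simp add: Qpow_eq c_def)
      moreover have "(c * s powr (\<alpha> * \<nu> / 2)) powr (2 / \<alpha>) = c powr (2 / \<alpha>) * s powr \<nu>"
        using c al by (simp add: powr_mult powr_powr)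
      ultimately show ?thesis using c lb
        by (simp add: ennreal_mult'[symmetric] exponential_density_nonneg mult_ac)
    qed (simp add: exponential_density_def)
  qed
  also have "\<dots> = ennreal (c powr (2 / \<alpha>)) * ennreal ((pi * lb) powr (- \<nu>) * Gamma (1 + \<nu>))"
    using lb nu1 by (subst nn_integral_cmult) (measurable, simp add: nn_integral_exponential_density_powr)
  finally show ?thesis using c by (simp add: c_def ennreal_mult'[symmetric])
qed

lemma nn_integral_mult_exp_distr_powr:
  fixes P :: "real measure"
  assumes "sigma_finite_measure P" and [measurable_cong]: "sets P = sets borel" and "a > 0"
  shows "(\<integral>\<^sup>+y. ennreal ((max 0 (fst y * snd y)) powr a) \<partial>(P \<Otimes>\<^sub>M exp_distr 1))
       = ennreal (Gamma (1 + a)) * (\<integral>\<^sup>+q. ennreal ((max 0 q) powr a) \<partial>P)"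
proof -
  interpret E: prob_space "exp_distr 1"
    unfolding exp_distr_def by (intro prob_space_exponential_density) simp
  have [measurable_cong]: "sets (exp_distr 1) = sets borel" by (simp add: exp_distr_def)
  have "(\<integral>\<^sup>+y. ennreal ((max 0 (fst y * snd y)) powr a) \<partial>(P \<Otimes>\<^sub>M exp_distr 1))
      = (\<integral>\<^sup>+q. (\<integral>\<^sup>+h. ennreal ((max 0 (q * h)) powr a) \<partial>exp_distr 1) \<partial>P)"
    using E.nn_integral_fst[symmetric, of "\<lambda>y. ennreal ((max 0 (fst y * snd y)) powr a)" P]
    by simp
  also have "\<dots> = (\<integral>\<^sup>+q. ennreal (Gamma (1 + a)) * ennreal ((max 0 q) powr a) \<partial>P)"
  proof (rule nn_integral_cong)
    fix q :: real
    have "(\<integral>\<^sup>+h. ennreal ((max 0 (q * h)) powr a) \<partial>exp_distr 1)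
        = (\<integral>\<^sup>+h. ennreal (exponential_density 1 h) * ennreal ((max 0 (q * h)) powr a) \<partial>lborel)"
      unfolding exp_distr_def by (rule nn_integral_density) (auto simp: exponential_density_nonneg)
    also have "\<dots> = (\<integral>\<^sup>+h. ennreal ((max 0 q) powr a) * (ennreal (exponential_density 1 h) * ennreal (h powr a)) \<partial>lborel)"
    proof (rule nn_integral_cong)
      fix h :: real
      show "ennreal (exponential_density 1 h) * ennreal ((max 0 (q * h)) powr a)
          = ennreal ((max 0 q) powr a) * (ennreal (exponential_density 1 h) * ennreal (h powr a))"
      proof (cases "h < 0")
        case False
        hence "max 0 (q * h) = max 0 q * h" by (simp add: max_mult_distrib_right)
        thus ?thesis using False by (simp add: powr_mult ennreal_mult'[symmetric] mult_ac exponential_density_def)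
      qed (simp add: exponential_density_def)
    qed
    also have "\<dots> = ennreal ((max 0 q) powr a) * ennreal (Gamma (1 + a))"
      using \<open>a > 0\<close> by (subst nn_integral_cmult) (measurable, simp add: nn_integral_exponential_density_powr)
    finally show "(\<integral>\<^sup>+h. ennreal ((max 0 (q * h)) powr a) \<partial>exp_distr 1)
        = ennreal (Gamma (1 + a)) * ennreal ((max 0 q) powr a)" by (simp add: mult.commute)
  qed
  also have "\<dots> = ennreal (Gamma (1 + a)) * (\<integral>\<^sup>+q. ennreal ((max 0 q) powr a) \<partial>P)"
    by (rule nn_integral_cmult) measurable
  finally show ?thesis .
qed
definition interference_exponent :: "real \<Rightarrow> real \<Rightarrow> real \<Rightarrow> real \<Rightarrow> real \<Rightarrow> real \<Rightarrow> real \<Rightarrow> real" where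
  "interference_exponent lI \<alpha> \<nu> Qbar lmin lmax lb =
     lI * pi * Gamma (1 - 2 / \<alpha>) * Gamma (1 + 2 / \<alpha>)
     * qconst \<alpha> \<nu> Qbar lmin lmax powr (2 / \<alpha>) * (pi * lb) powr (- \<nu>) * Gamma (1 + \<nu>)"

lemma interference_exponent_nonneg:
  assumes "\<alpha> > 2" "\<nu> > - 2 / \<alpha>" "lI \<ge> 0"
  shows "interference_exponent lI \<alpha> \<nu> Qbar lmin lmax lb \<ge> 0"
proof -
  have "2 / \<alpha> < 1" "2 / \<alpha> > 0" using assms(1) by simp_all
  hence "\<nu> > -1" "1 + 2 / \<alpha> > 0" using assms(2) by linarith+
  thus ?thesis using assms unfolding interference_exponent_def
    by (intro mult_nonneg_nonneg Gamma_real_nonneg) auto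
qed

lemma interference_exponent_over_threshold:
  assumes "\<theta> > 0" "lb > 0" "qconst \<alpha> \<nu> Qbar lmin lmax > 0"
  shows "(\<theta> / qconst \<alpha> \<nu> Qbar lmin lmax) powr (2 / \<alpha>) * interference_exponent lI \<alpha> \<nu> Qbar lmin lmax lb
       = lI / lb * \<theta> powr (2 / \<alpha>) * Gamma (1 + 2 / \<alpha>) * Gamma (1 - 2 / \<alpha>) * Gamma (1 + \<nu>) * (pi * lb) powr (1 - \<nu>)"
proof -
  have "(\<theta> / qconst \<alpha> \<nu> Qbar lmin lmax) powr (2 / \<alpha>) * qconst \<alpha> \<nu> Qbar lmin lmax powr (2 / \<alpha>) = \<theta> powr (2 / \<alpha>)"
    using assms by (simp add: powr_divide)
  moreover have "(pi * lb) powr (1 - \<nu>) = pi * lb * (pi * lb) powr (- \<nu>)"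
    using assms by (simp add: powr_diff powr_minus field_simps)
  ultimately show ?thesis
    using assms unfolding interference_exponent_def by (simp add: field_simps)
qed

lemma nn_integral_interferer_intensity:
  fixes \<alpha> \<nu> Qbar lmin lmax lb lI t :: real
  assumes al: "\<alpha> > 2" and nu: "\<nu> > - 2 / \<alpha>" and Q: "Qbar > 0" "lmin > 0" "lmax > 0" and lb: "lb > 0"
    and lI: "lI \<ge> 0" and t: "t \<ge> 0"
  shows "(\<integral>\<^sup>+p. ennreal (1 - exp (- (t * max 0 (fst (snd p) * snd (snd p) * norm (fst p) powr (- \<alpha>)))))
            \<partial>interferer_intensity lI \<alpha> \<nu> Qbar lmin lmax lb)
       = ennreal (t powr (2 / \<alpha>) * interference_exponent lI \<alpha> \<nu> Qbar lmin lmax lb)"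
proof -
  define PQ where "PQ = Q_distr \<alpha> \<nu> Qbar lmin lmax lb"
  define PE where "PE = exp_distr 1"
  define C where "C = pi * Gamma (1 - 2 / \<alpha>) * t powr (2 / \<alpha>)"
  define F where "F p = ennreal (1 - exp (- (t * max 0 (fst (snd p) * snd (snd p) * norm (fst p) powr (- \<alpha>)))))"
    for p :: "(real \<times> real) \<times> real \<times> real"
  have PQ_sets [measurable_cong]: "sets PQ = sets borel" by (simp add: PQ_def Q_distr_def)
  have [measurable_cong]: "sets PE = sets borel" by (simp add: PE_def exp_distr_def)
  interpret PQ: prob_space PQ unfolding PQ_def Q_distr_def exp_distr_def
    using lb by (intro prob_space.prob_space_distr prob_space_exponential_density) auto
  interpret PE: prob_space PE unfolding PE_def exp_distr_def by (intro prob_space_exponential_density) simp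
  interpret PQE: pair_prob_space PQ PE ..
  have QE: "sigma_finite_measure (PQ \<Otimes>\<^sub>M PE)" by (rule prob_space_imp_sigma_finite) unfold_locales
  have spatial: "(\<integral>\<^sup>+x. F (x, y) \<partial>lborel) = ennreal C * ennreal ((max 0 (fst y * snd y)) powr (2 / \<alpha>))" for y
    unfolding F_def C_def using t al by (simp add: nn_integral_one_minus_exp_max_norm_powr)
  have "(\<integral>\<^sup>+p. F p \<partial>interferer_intensity lI \<alpha> \<nu> Qbar lmin lmax lb)
      = (\<integral>\<^sup>+x. (\<integral>\<^sup>+y. F (x, y) \<partial>(PQ \<Otimes>\<^sub>M PE)) \<partial>density lborel (\<lambda>_. ennreal lI))"
    unfolding interferer_intensity_def PQ_def[symmetric] PE_def[symmetric]
    by (rule sigma_finite_measure.nn_integral_fst[OF QE, symmetric]) (unfold F_def, measurable)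
  also have "\<dots> = ennreal lI * (\<integral>\<^sup>+x. (\<integral>\<^sup>+y. F (x, y) \<partial>(PQ \<Otimes>\<^sub>M PE)) \<partial>lborel)"
    by (subst nn_integral_density) (unfold F_def, measurable, simp add: nn_integral_cmult)
  also have "(\<integral>\<^sup>+x. (\<integral>\<^sup>+y. F (x, y) \<partial>(PQ \<Otimes>\<^sub>M PE)) \<partial>lborel) = (\<integral>\<^sup>+y. (\<integral>\<^sup>+x. F (x, y) \<partial>lborel) \<partial>(PQ \<Otimes>\<^sub>M PE))"
    by (rule pair_sigma_finite.Fubini'[symmetric])
      (simp add: pair_sigma_finite_def lborel.sigma_finite_measure_axioms QE, unfold F_def, measurable)
  also have "\<dots> = ennreal C * (\<integral>\<^sup>+y. ennreal ((max 0 (fst y * snd y)) powr (2 / \<alpha>)) \<partial>(PQ \<Otimes>\<^sub>M PE))"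
    unfolding spatial by (rule nn_integral_cmult) measurable
  also have "(\<integral>\<^sup>+y. ennreal ((max 0 (fst y * snd y)) powr (2 / \<alpha>)) \<partial>(PQ \<Otimes>\<^sub>M PE))
      = ennreal (Gamma (1 + 2 / \<alpha>)) * (\<integral>\<^sup>+q. ennreal ((max 0 q) powr (2 / \<alpha>)) \<partial>PQ)"
    unfolding PE_def using al
    by (intro nn_integral_mult_exp_distr_powr prob_space_imp_sigma_finite PQ.prob_space_axioms PQ_sets) auto
  also have "(\<integral>\<^sup>+q. ennreal ((max 0 q) powr (2 / \<alpha>)) \<partial>PQ)
      = ennreal (qconst \<alpha> \<nu> Qbar lmin lmax powr (2 / \<alpha>) * ((pi * lb) powr (- \<nu>) * Gamma (1 + \<nu>)))"
    unfolding PQ_def using al nu Q lb by (rule nn_integral_Q_distr_powr)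
  moreover have "2 / \<alpha> < 1" "2 / \<alpha> > 0" using al by simp_all
  hence "0 < 1 - 2 / \<alpha>" "0 < 1 + 2 / \<alpha>" "0 < 1 + \<nu>" using nu by linarith+
  hence "Gamma (1 - 2 / \<alpha>) > 0" "Gamma (1 + 2 / \<alpha>) > 0" "Gamma (1 + \<nu>) > 0"
    by (simp_all add: Gamma_real_pos)
  ultimately show ?thesis
    using lI t by (simp add: F_def C_def interference_exponent_def ennreal_mult[symmetric] mult_ac)
qed

definition interference :: "real \<Rightarrow> ((real \<times> real) \<times> real \<times> real) set \<Rightarrow> ennreal" where
  "interference \<alpha> S = (\<Sum>\<^sub>\<infinity>p\<in>S. ennreal (fst (snd p) * snd (snd p) * norm (fst p) powr (- \<alpha>)))"

lemma interference_cmult: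
  assumes "c \<ge> 0"
  shows "(\<Sum>\<^sub>\<infinity>p\<in>S. ennreal (c * max 0 (fst (snd p) * snd (snd p) * norm (fst p) powr (- \<alpha>))))
       = ennreal c * interference \<alpha> S"
  using infsum_ennreal_cmult[OF assms, of "\<lambda>p. max 0 (fst (snd p) * snd (snd p) * norm (fst p) powr (- \<alpha>))" S]
  by (simp add: interference_def ennreal_max_0)

lemma space_interferer_intensity: "space (interferer_intensity lI \<alpha> \<nu> Qbar lmin lmax lb) = UNIV"
  by (simp add: interferer_intensity_def space_pair_measure Q_distr_def exp_distr_def)

lemma path_loss_borel_measurable [measurable]:
  "(\<lambda>p. c * max 0 (fst (snd p) * snd (snd p) * norm (fst p) powr (- \<alpha>)))
     \<in> borel_measurable (interferer_intensity lI \<alpha> \<nu> Qbar lmin lmax lb)"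
  unfolding interferer_intensity_def Q_distr_def exp_distr_def by measurable

lemma interference_borel_measurable:
  assumes "\<alpha> > 2" "\<nu> > - 2 / \<alpha>" "Qbar > 0" "lmin > 0" "lmax > 0" "lb > 0" "lI \<ge> 0"
  shows "interference \<alpha> \<in> borel_measurable (ppp_space (interferer_intensity lI \<alpha> \<nu> Qbar lmin lmax lb))"
proof -
  have "(\<integral>\<^sup>+p. ennreal (1 - exp (- (1 * max 0 (fst (snd p) * snd (snd p) * norm (fst p) powr (- \<alpha>)))))
            \<partial>interferer_intensity lI \<alpha> \<nu> Qbar lmin lmax lb)
      = ennreal (1 powr (2 / \<alpha>) * interference_exponent lI \<alpha> \<nu> Qbar lmin lmax lb)"
    using assms by (intro nn_integral_interferer_intensity) auto
  hence "(\<lambda>S. \<Sum>\<^sub>\<infinity>p\<in>S. ennreal (1 * max 0 (fst (snd p) * snd (snd p) * norm (fst p) powr (- \<alpha>))))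
          \<in> borel_measurable (ppp_space (interferer_intensity lI \<alpha> \<nu> Qbar lmin lmax lb))"
    by (intro infsum_borel_measurable_ppp_space space_interferer_intensity path_loss_borel_measurable) simp_all
  thus ?thesis by (simp only: interference_cmult[of 1]) simp
qed

lemma (in prob_space) laplace_interference:
  assumes PPP: "poisson_point_process (interferer_intensity lI \<alpha> \<nu> Qbar lmin lmax lb) \<Phi>"
    and "\<alpha> > 2" "\<nu> > - 2 / \<alpha>" "Qbar > 0" "lmin > 0" "lmax > 0" "lb > 0" "lI \<ge> 0" and c: "c \<ge> 0"
  shows "(\<integral>\<^sup>+\<omega>. exp_neg_ennreal (ennreal c * interference \<alpha> (\<Phi> \<omega>)) \<partial>M)
       = ennreal (exp (- (c powr (2 / \<alpha>) * interference_exponent lI \<alpha> \<nu> Qbar lmin lmax lb)))"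
proof -
  have L: "(\<integral>\<^sup>+p. ennreal (1 - exp (- (c * max 0 (fst (snd p) * snd (snd p) * norm (fst p) powr (- \<alpha>)))))
            \<partial>interferer_intensity lI \<alpha> \<nu> Qbar lmin lmax lb)
      = ennreal (c powr (2 / \<alpha>) * interference_exponent lI \<alpha> \<nu> Qbar lmin lmax lb)"
    using assms by (intro nn_integral_interferer_intensity) auto
  have "(\<integral>\<^sup>+\<omega>. exp_neg_ennreal (\<Sum>\<^sub>\<infinity>p\<in>\<Phi> \<omega>. ennreal (c * max 0 (fst (snd p) * snd (snd p) * norm (fst p) powr (- \<alpha>)))) \<partial>M)
      = exp_neg_ennreal (ennreal (c powr (2 / \<alpha>) * interference_exponent lI \<alpha> \<nu> Qbar lmin lmax lb))"
    using c unfolding L[symmetric]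
    by (intro poisson_point_process_laplace_functional[OF PPP space_interferer_intensity path_loss_borel_measurable])
      (simp_all add: L)
  thus ?thesis
    using assms interference_exponent_nonneg[of \<alpha> \<nu> lI] by (simp add: interference_cmult)
qed

lemma (in prob_space) laplace_interference_received_power:
  assumes PPP: "poisson_point_process (interferer_intensity lI \<alpha> \<nu> Qbar lmin lmax lb) \<Phi>"
    and al: "\<alpha> > 2" and nu: "\<nu> > - 2 / \<alpha>" and Q: "Qbar > 0" "lmin > 0" "lmax > 0" and lb: "lb > 0"
    and lI: "lI \<ge> 0" and \<theta>: "\<theta> > 0" and r: "r > 0"
  shows "(\<integral>\<^sup>+\<omega>. exp_neg_ennreal (ennreal (\<theta> / (Qpow \<alpha> \<nu> Qbar lmin lmax r * r powr (- \<alpha>)))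
                                  * interference \<alpha> (\<Phi> \<omega>)) \<partial>M)
       = ennreal (exp (- (lI / lb * \<theta> powr (2 / \<alpha>) * Gamma (1 + 2 / \<alpha>) * Gamma (1 - 2 / \<alpha>) * Gamma (1 + \<nu>)
                          * (pi * lb) powr (1 - \<nu>) * (r\<^sup>2) powr (1 - \<nu>))))"
proof -
  define c where "c = qconst \<alpha> \<nu> Qbar lmin lmax"
  define K where "K = interference_exponent lI \<alpha> \<nu> Qbar lmin lmax lb"
  have c: "c > 0" unfolding c_def using al nu Q by (rule qconst_pos)
  have "(\<theta> / (Qpow \<alpha> \<nu> Qbar lmin lmax r * r powr (- \<alpha>))) powr (2 / \<alpha>) = (\<theta> / c) powr (2 / \<alpha>) * (r\<^sup>2) powr (1 - \<nu>)"
    unfolding Qpow_eq c_def[symmetric] using r c \<theta> al by (intro threshold_over_received_power_powr) auto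
  hence "(\<theta> / (Qpow \<alpha> \<nu> Qbar lmin lmax r * r powr (- \<alpha>))) powr (2 / \<alpha>) * K
      = ((\<theta> / c) powr (2 / \<alpha>) * K) * (r\<^sup>2) powr (1 - \<nu>)" by (simp add: mult_ac)
  also have "(\<theta> / c) powr (2 / \<alpha>) * K
      = lI / lb * \<theta> powr (2 / \<alpha>) * Gamma (1 + 2 / \<alpha>) * Gamma (1 - 2 / \<alpha>) * Gamma (1 + \<nu>) * (pi * lb) powr (1 - \<nu>)"
    unfolding c_def K_def using \<theta> lb c[unfolded c_def] by (rule interference_exponent_over_threshold)
  finally have "(\<theta> / (Qpow \<alpha> \<nu> Qbar lmin lmax r * r powr (- \<alpha>))) powr (2 / \<alpha>) * K
      = lI / lb * \<theta> powr (2 / \<alpha>) * Gamma (1 + 2 / \<alpha>) * Gamma (1 - 2 / \<alpha>) * Gamma (1 + \<nu>)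
        * (pi * lb) powr (1 - \<nu>) * (r\<^sup>2) powr (1 - \<nu>)" .
  moreover have "\<theta> / (Qpow \<alpha> \<nu> Qbar lmin lmax r * r powr (- \<alpha>)) \<ge> 0"
    using Qpow_pos[OF al nu Q r] \<theta> by simp
  ultimately show ?thesis
    using laplace_interference[OF PPP al nu Q lb lI, of "\<theta> / (Qpow \<alpha> \<nu> Qbar lmin lmax r * r powr (- \<alpha>))"]
    by (simp add: K_def)
qed

section \<open>Coverage probability\<close>

lemma (in prob_space) distr_pair_eq_pair_measure:
  assumes X: "X \<in> measurable M MX" and Y: "Y \<in> measurable M MY"
    and indep: "\<And>A B. A \<in> sets MX \<Longrightarrow> B \<in> sets MY \<Longrightarrow>
      prob (X -` A \<inter> space M \<inter> (Y -` B \<inter> space M)) = prob (X -` A \<inter> space M) * prob (Y -` B \<inter> space M)"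
  shows "distr M (MX \<Otimes>\<^sub>M MY) (\<lambda>\<omega>. (X \<omega>, Y \<omega>)) = distr M MX X \<Otimes>\<^sub>M distr M MY Y"
proof (rule pair_measure_eqI[symmetric])
  show "sigma_finite_measure (distr M MX X)" "sigma_finite_measure (distr M MY Y)"
    using X Y by (auto intro!: prob_space_imp_sigma_finite prob_space_distr)
  show "sets (distr M MX X \<Otimes>\<^sub>M distr M MY Y) = sets (distr M (MX \<Otimes>\<^sub>M MY) (\<lambda>\<omega>. (X \<omega>, Y \<omega>)))"
    by simp
  fix A B assume A: "A \<in> sets (distr M MX X)" and B: "B \<in> sets (distr M MY Y)"
  have "(\<lambda>\<omega>. (X \<omega>, Y \<omega>)) -` (A \<times> B) \<inter> space M = X -` A \<inter> space M \<inter> (Y -` B \<inter> space M)" by auto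
  thus "emeasure (distr M MX X) A * emeasure (distr M MY Y) B
      = emeasure (distr M (MX \<Otimes>\<^sub>M MY) (\<lambda>\<omega>. (X \<omega>, Y \<omega>))) (A \<times> B)"
    using A B X Y indep by (simp add: emeasure_distr emeasure_eq_measure ennreal_mult[symmetric])
qed

lemma Int_stable_vimage_sets: "Int_stable {f -` B \<inter> space M | B. B \<in> sets N}"
  unfolding Int_stable_def
proof safe
  fix B1 B2 assume "B1 \<in> sets N" "B2 \<in> sets N"
  thus "\<exists>B. f -` B1 \<inter> space M \<inter> (f -` B2 \<inter> space M) = f -` B \<inter> space M \<and> B \<in> sets N"
    by (intro exI[of _ "B1 \<inter> B2"]) auto
qed

lemma vimage_Pair_in_sigma_sets:
  assumes Y: "Y \<in> measurable M MY" and Z: "Z \<in> measurable M MZ" and B: "B \<in> sets (MY \<Otimes>\<^sub>M MZ)"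
  shows "(\<lambda>\<omega>. (Y \<omega>, Z \<omega>)) -` B \<inter> space M
           \<in> sigma_sets (space M) ({Y -` A \<inter> space M | A. A \<in> sets MY} \<union> {Z -` A \<inter> space M | A. A \<in> sets MZ})"
    (is "_ \<in> sigma_sets _ ?G")
proof -
  have G: "?G \<subseteq> Pow (space M)" by auto
  have sS: "sets (sigma (space M) ?G) = sigma_sets (space M) ?G" and spS: "space (sigma (space M) ?G) = space M"
    using G by (rule sets_measure_of, rule space_measure_of)
  have "Y \<in> measurable (sigma (space M) ?G) MY" "Z \<in> measurable (sigma (space M) ?G) MZ"
    unfolding measurable_def using measurable_space[OF Y] measurable_space[OF Z]
    by (auto simp: spS sS intro!: sigma_sets.Basic)
  hence "(\<lambda>\<omega>. (Y \<omega>, Z \<omega>)) \<in> measurable (sigma (space M) ?G) (MY \<Otimes>\<^sub>M MZ)" by (rule measurable_Pair)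
  from measurable_sets[OF this B] show ?thesis by (simp add: spS sS)
qed

lemma (in prob_space) distr_triple_eq_pair_measure:
  assumes X: "X \<in> measurable M MX" and Y: "Y \<in> measurable M MY" and Z: "Z \<in> measurable M MZ"
    and ind: "indep_sets (\<lambda>i::nat. if i = 0 then {X -` B \<inter> space M | B. B \<in> sets MX}
                     else if i = 1 then {Y -` B \<inter> space M | B. B \<in> sets MY}
                     else {Z -` B \<inter> space M | B. B \<in> sets MZ}) {0, 1, 2}"
  shows "distr M (MX \<Otimes>\<^sub>M (MY \<Otimes>\<^sub>M MZ)) (\<lambda>\<omega>. (X \<omega>, Y \<omega>, Z \<omega>))
       = distr M MX X \<Otimes>\<^sub>M (distr M MY Y \<Otimes>\<^sub>M distr M MZ Z)"
proof -
  define E where "E = (\<lambda>i::nat. if i = 0 then {X -` B \<inter> space M | B. B \<in> sets MX}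
                     else if i = 1 then {Y -` B \<inter> space M | B. B \<in> sets MY}
                     else {Z -` B \<inter> space M | B. B \<in> sets MZ})"
  have E: "E 0 = {X -` B \<inter> space M | B. B \<in> sets MX}" "E (Suc 0) = {Y -` B \<inter> space M | B. B \<in> sets MY}"
    "E 2 = {Z -` B \<inter> space M | B. B \<in> sets MZ}" by (simp_all add: E_def)
  have indE: "indep_sets E {0, 1, 2}" using ind by (simp add: E_def)
  have YZ: "distr M (MY \<Otimes>\<^sub>M MZ) (\<lambda>\<omega>. (Y \<omega>, Z \<omega>)) = distr M MY Y \<Otimes>\<^sub>M distr M MZ Z"
  proof (rule distr_pair_eq_pair_measure[OF Y Z])
    fix A B assume "A \<in> sets MY" "B \<in> sets MZ"
    thus "prob (Y -` A \<inter> space M \<inter> (Z -` B \<inter> space M)) = prob (Y -` A \<inter> space M) * prob (Z -` B \<inter> space M)"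
      using indep_setsD[OF indE, of "{1, 2}" "\<lambda>j. if j = 1 then Y -` A \<inter> space M else Z -` B \<inter> space M"]
      by (auto simp: E Int_commute)
  qed
  define I where "I = (\<lambda>j::nat. if j = 0 then {0::nat} else {1, 2})"
  have ind2: "indep_sets (\<lambda>j. sigma_sets (space M) (\<Union>i\<in>I j. E i)) {0, 1}"
  proof (rule indep_sets_collect_sigma)
    have "(\<Union>j\<in>{0::nat, 1}. I j) = {0, 1, 2}" by (auto simp: I_def)
    thus "indep_sets E (\<Union>j\<in>{0::nat, 1}. I j)" using indE by simp
    show "\<And>i j. j \<in> {0, 1} \<Longrightarrow> i \<in> I j \<Longrightarrow> Int_stable (E i)"
      by (auto simp: E_def Int_stable_vimage_sets)
    show "disjoint_family_on I {0, 1}" by (auto simp: disjoint_family_on_def I_def)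
  qed
  have "distr M (MX \<Otimes>\<^sub>M (MY \<Otimes>\<^sub>M MZ)) (\<lambda>\<omega>. (X \<omega>, Y \<omega>, Z \<omega>))
      = distr M MX X \<Otimes>\<^sub>M distr M (MY \<Otimes>\<^sub>M MZ) (\<lambda>\<omega>. (Y \<omega>, Z \<omega>))"
  proof (rule distr_pair_eq_pair_measure[OF X measurable_Pair[OF Y Z]])
    fix A B assume A: "A \<in> sets MX" and B: "B \<in> sets (MY \<Otimes>\<^sub>M MZ)"
    define F where "F j = (if j = (0::nat) then X -` A \<inter> space M else (\<lambda>\<omega>. (Y \<omega>, Z \<omega>)) -` B \<inter> space M)" for j
    have "F 0 \<in> sigma_sets (space M) (\<Union>i\<in>I 0. E i)"
      using A by (auto simp: F_def I_def E intro!: sigma_sets.Basic)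
    moreover have "(\<Union>i\<in>I 1. E i) = {Y -` A \<inter> space M | A. A \<in> sets MY} \<union> {Z -` A \<inter> space M | A. A \<in> sets MZ}"
      by (auto simp: I_def E_def)
    hence "F 1 \<in> sigma_sets (space M) (\<Union>i\<in>I 1. E i)"
      using vimage_Pair_in_sigma_sets[OF Y Z B] by (simp add: F_def)
    ultimately have "\<forall>j\<in>{0, 1}. F j \<in> sigma_sets (space M) (\<Union>i\<in>I j. E i)" by auto
    from indep_setsD[OF ind2 _ _ _ this]
    show "prob (X -` A \<inter> space M \<inter> ((\<lambda>\<omega>. (Y \<omega>, Z \<omega>)) -` B \<inter> space M))
        = prob (X -` A \<inter> space M) * prob ((\<lambda>\<omega>. (Y \<omega>, Z \<omega>)) -` B \<inter> space M)"
      by (simp add: F_def Int_commute)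
  qed
  thus ?thesis by (simp add: YZ)
qed

lemma nn_integral_exp_distr_threshold:
  fixes \<sigma> \<theta> :: real and I :: ennreal
  assumes \<sigma>: "\<sigma> > 0" and th: "\<theta> > 0"
  shows "(\<integral>\<^sup>+h. indicator {h. ennreal \<theta> * I \<le> ennreal (\<sigma> * h)} h \<partial>exp_distr 1) = exp_neg_ennreal (ennreal (\<theta> / \<sigma>) * I)"
proof (cases "I = \<top>")
  case True
  have "ennreal \<theta> * I = \<top>" using th True by (simp add: ennreal_mult_top)
  hence "{h. ennreal \<theta> * I \<le> ennreal (\<sigma> * h)} = {}" by (auto simp: top_unique)
  moreover have "ennreal (\<theta> / \<sigma>) * I = \<top>" using th \<sigma> True by (simp add: ennreal_mult_top)
  ultimately show ?thesis by (simp add: exp_neg_ennreal_def)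
next
  case False
  then obtain y where y: "I = ennreal y" "y \<ge> 0" by (cases I) auto
  have "(\<integral>\<^sup>+h. indicator {h. ennreal \<theta> * I \<le> ennreal (\<sigma> * h)} h \<partial>exp_distr 1)
      = (\<integral>\<^sup>+h. ennreal (exponential_density 1 h) * indicator {h. ennreal \<theta> * I \<le> ennreal (\<sigma> * h)} h \<partial>lborel)"
    unfolding exp_distr_def by (rule nn_integral_density) (auto simp: exponential_density_nonneg)
  also have "\<dots> = (\<integral>\<^sup>+h. ennreal (exponential_density 1 h) * indicator {\<theta> * y / \<sigma>..} h \<partial>lborel)"
  proof (rule nn_integral_cong)
    fix h :: real
    show "ennreal (exponential_density 1 h) * indicator {h. ennreal \<theta> * I \<le> ennreal (\<sigma> * h)} h
        = ennreal (exponential_density 1 h) * indicator {\<theta> * y / \<sigma>..} h"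
    proof (cases "h < 0")
      case True thus ?thesis by (simp add: exponential_density_def)
    next
      case False
      hence "ennreal \<theta> * I \<le> ennreal (\<sigma> * h) \<longleftrightarrow> \<theta> * y \<le> \<sigma> * h"
        using y th \<sigma> by (simp add: ennreal_mult'[symmetric] ennreal_le_iff)
      also have "\<dots> \<longleftrightarrow> \<theta> * y / \<sigma> \<le> h" using \<sigma> by (simp add: field_simps)
      finally show ?thesis by (simp add: indicator_def)
    qed
  qed
  also have "\<dots> = ennreal (exp (- (\<theta> * y / \<sigma>)))"
    using th \<sigma> y by (intro nn_integral_exponential_density_tail) simp
  also have "\<dots> = exp_neg_ennreal (ennreal (\<theta> / \<sigma>) * I)"
    using th \<sigma> y by (simp add: ennreal_mult'[symmetric])
  finally show ?thesis .
qed

lemma (in prob_space) coverage_given_distance: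
  fixes R H :: "'a \<Rightarrow> real" and \<Phi> :: "'a \<Rightarrow> 'b" and I :: "'b \<Rightarrow> ennreal" and \<sigma> :: "real \<Rightarrow> real"
  assumes [measurable]: "R \<in> borel_measurable M" "H \<in> borel_measurable M" "\<Phi> \<in> measurable M N"
    and [measurable]: "I \<in> borel_measurable N" "\<sigma> \<in> borel_measurable borel"
    and joint: "distr M (borel \<Otimes>\<^sub>M (borel \<Otimes>\<^sub>M N)) (\<lambda>\<omega>. (R \<omega>, H \<omega>, \<Phi> \<omega>))
                = distr M borel R \<Otimes>\<^sub>M (exp_distr 1 \<Otimes>\<^sub>M distr M N \<Phi>)"
    and \<sigma>_pos: "AE \<omega> in M. \<sigma> (R \<omega>) > 0" and \<theta>: "\<theta> > 0"
  shows "emeasure M {\<omega> \<in> space M. ennreal \<theta> * I (\<Phi> \<omega>) \<le> ennreal (\<sigma> (R \<omega>) * H \<omega>)}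
       = (\<integral>\<^sup>+\<omega>. (\<integral>\<^sup>+\<omega>'. exp_neg_ennreal (ennreal (\<theta> / \<sigma> (R \<omega>)) * I (\<Phi> \<omega>')) \<partial>M) \<partial>M)"
proof -
  define PR where "PR = distr M borel R"
  define PH where "PH = exp_distr 1"
  define PP where "PP = distr M N \<Phi>"
  have [measurable_cong]: "sets PR = sets borel" "sets PH = sets borel" "sets PP = sets N"
    by (simp_all add: PR_def PH_def PP_def exp_distr_def)
  interpret PH: prob_space PH unfolding PH_def exp_distr_def by (intro prob_space_exponential_density) simp
  interpret PP: prob_space PP unfolding PP_def by (intro prob_space_distr) simp
  interpret HP: pair_prob_space PH PP ..
  have HP: "sigma_finite_measure (PH \<Otimes>\<^sub>M PP)" by (rule prob_space_imp_sigma_finite) unfold_locales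
  define \<Psi> where "\<Psi> z = (indicator {z. ennreal \<theta> * I (snd (snd z)) \<le> ennreal (\<sigma> (fst z) * fst (snd z))} z :: ennreal)"
    for z :: "real \<times> real \<times> 'b"
  have [measurable]: "\<Psi> \<in> borel_measurable (borel \<Otimes>\<^sub>M (borel \<Otimes>\<^sub>M N))" unfolding \<Psi>_def by measurable
  have inner: "(\<integral>\<^sup>+y. \<Psi> (r, y) \<partial>(PH \<Otimes>\<^sub>M PP)) = (\<integral>\<^sup>+\<omega>'. exp_neg_ennreal (ennreal (\<theta> / \<sigma> r) * I (\<Phi> \<omega>')) \<partial>M)"
    if r: "\<sigma> r > 0" for r
  proof -
    have "(\<integral>\<^sup>+y. \<Psi> (r, y) \<partial>(PH \<Otimes>\<^sub>M PP)) = (\<integral>\<^sup>+S. (\<integral>\<^sup>+h. \<Psi> (r, h, S) \<partial>PH) \<partial>PP)"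
      by (rule HP.nn_integral_snd[symmetric]) measurable
    also have "\<dots> = (\<integral>\<^sup>+S. exp_neg_ennreal (ennreal (\<theta> / \<sigma> r) * I S) \<partial>PP)"
    proof (rule nn_integral_cong)
      fix S
      have "(\<integral>\<^sup>+h. \<Psi> (r, h, S) \<partial>PH) = (\<integral>\<^sup>+h. indicator {h. ennreal \<theta> * I S \<le> ennreal (\<sigma> r * h)} h \<partial>exp_distr 1)"
        unfolding PH_def \<Psi>_def by (simp add: indicator_def)
      also have "\<dots> = exp_neg_ennreal (ennreal (\<theta> / \<sigma> r) * I S)"
        using r \<theta> by (rule nn_integral_exp_distr_threshold)
      finally show "(\<integral>\<^sup>+h. \<Psi> (r, h, S) \<partial>PH) = exp_neg_ennreal (ennreal (\<theta> / \<sigma> r) * I S)" .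
    qed
    also have "\<dots> = (\<integral>\<^sup>+\<omega>'. exp_neg_ennreal (ennreal (\<theta> / \<sigma> r) * I (\<Phi> \<omega>')) \<partial>M)"
      unfolding PP_def by (rule nn_integral_distr) measurable
    finally show ?thesis .
  qed
  have E: "{\<omega> \<in> space M. ennreal \<theta> * I (\<Phi> \<omega>) \<le> ennreal (\<sigma> (R \<omega>) * H \<omega>)} \<in> sets M"
    by measurable
  have "emeasure M {\<omega> \<in> space M. ennreal \<theta> * I (\<Phi> \<omega>) \<le> ennreal (\<sigma> (R \<omega>) * H \<omega>)}
      = (\<integral>\<^sup>+\<omega>. \<Psi> (R \<omega>, H \<omega>, \<Phi> \<omega>) \<partial>M)"
    by (subst nn_integral_indicator[symmetric, OF E], intro nn_integral_cong) (simp add: \<Psi>_def indicator_def)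
  also have "\<dots> = (\<integral>\<^sup>+z. \<Psi> z \<partial>(PR \<Otimes>\<^sub>M (PH \<Otimes>\<^sub>M PP)))"
    unfolding PR_def PH_def PP_def joint[symmetric] by (rule nn_integral_distr[symmetric]) measurable
  also have "\<dots> = (\<integral>\<^sup>+r. (\<integral>\<^sup>+y. \<Psi> (r, y) \<partial>(PH \<Otimes>\<^sub>M PP)) \<partial>PR)"
    by (rule sigma_finite_measure.nn_integral_fst[OF HP, symmetric]) measurable
  also have "\<dots> = (\<integral>\<^sup>+\<omega>. (\<integral>\<^sup>+y. \<Psi> (R \<omega>, y) \<partial>(PH \<Otimes>\<^sub>M PP)) \<partial>M)"
    unfolding PR_def
    by (rule nn_integral_distr) (simp, rule sigma_finite_measure.borel_measurable_nn_integral[OF HP], measurable)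
  also have "\<dots> = (\<integral>\<^sup>+\<omega>. (\<integral>\<^sup>+\<omega>'. exp_neg_ennreal (ennreal (\<theta> / \<sigma> (R \<omega>)) * I (\<Phi> \<omega>')) \<partial>M) \<partial>M)"
    using \<sigma>_pos by (intro nn_integral_cong_AE) (auto elim!: eventually_mono simp: inner)
  finally show ?thesis .
qed

lemma nn_integral_exponential_density_stretched_exp:
  fixes l B \<nu> :: real
  assumes l: "l > 0"
  shows "(\<integral>\<^sup>+s. ennreal (exponential_density l s) * ennreal (exp (- (B * l powr (1 - \<nu>) * s powr (1 - \<nu>)))) \<partial>lborel)
       = (\<integral>\<^sup>+u. ennreal (indicator {0<..} u * exp (- (B * u powr (1 - \<nu>) + u))) \<partial>lborel)"
proof -
  have "(\<integral>\<^sup>+u. ennreal (indicator {0<..} u * exp (- (B * u powr (1 - \<nu>) + u))) \<partial>lborel)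
      = ennreal l * (\<integral>\<^sup>+s. ennreal (indicator {0<..} (l * s) * exp (- (B * (l * s) powr (1 - \<nu>) + l * s))) \<partial>lborel)"
    using l nn_integral_real_affine[of "\<lambda>u. ennreal (indicator {0<..} u * exp (- (B * u powr (1 - \<nu>) + u)))" l 0]
    by simp
  also have "\<dots> = (\<integral>\<^sup>+s. ennreal l * ennreal (indicator {0<..} (l * s) * exp (- (B * (l * s) powr (1 - \<nu>) + l * s))) \<partial>lborel)"
    by (rule nn_integral_cmult[symmetric]) measurable
  also have "\<dots> = (\<integral>\<^sup>+s. ennreal (exponential_density l s) * ennreal (exp (- (B * l powr (1 - \<nu>) * s powr (1 - \<nu>)))) \<partial>lborel)"
  proof (rule nn_integral_cong_AE)
    show "AE s in lborel. ennreal l * ennreal (indicator {0<..} (l * s) * exp (- (B * (l * s) powr (1 - \<nu>) + l * s)))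
        = ennreal (exponential_density l s) * ennreal (exp (- (B * l powr (1 - \<nu>) * s powr (1 - \<nu>))))"
      using AE_lborel_singleton[of 0]
    proof eventually_elim
      case (elim s)
      show ?case
      proof (cases "s > 0")
        case True
        have "(l * s) powr (1 - \<nu>) = l powr (1 - \<nu>) * s powr (1 - \<nu>)" using l True by (simp add: powr_mult)
        thus ?thesis using True l
          by (simp add: exponential_density_def ennreal_mult'[symmetric] exp_add[symmetric] mult_ac)
      next
        case False
        hence "s < 0" "l * s < 0" using elim l by (auto simp: mult_pos_neg)
        thus ?thesis by (simp add: exponential_density_def indicator_def)
      qed
    qed
  qed
  finally show ?thesis ..
qed

lemma (in prob_space) AE_pos_if_square_exp_distr:
  fixes R :: "'a \<Rightarrow> real"
  assumes [measurable]: "R \<in> borel_measurable M" and "\<forall>\<omega>\<in>space M. R \<omega> \<ge> 0"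
    and R: "distr M borel (\<lambda>\<omega>. (R \<omega>)\<^sup>2) = exp_distr l"
  shows "AE \<omega> in M. R \<omega> > 0"
proof -
  have "AE s in exp_distr l. s \<noteq> 0"
    unfolding exp_distr_def using AE_lborel_singleton[of 0] by (subst AE_density) (auto elim: eventually_mono)
  hence "AE \<omega> in M. (R \<omega>)\<^sup>2 \<noteq> 0" unfolding R[symmetric] by (subst (asm) AE_distr_iff) auto
  thus ?thesis using assms(2) by (auto elim!: eventually_mono simp: less_le)
qed

lemma (in prob_space) nn_integral_stretched_exp_distance:
  fixes R :: "'a \<Rightarrow> real"
  assumes [measurable]: "R \<in> borel_measurable M" and R: "distr M borel (\<lambda>\<omega>. (R \<omega>)\<^sup>2) = exp_distr l" and l: "l > 0"
  shows "(\<integral>\<^sup>+\<omega>. ennreal (exp (- (B * l powr (1 - \<nu>) * ((R \<omega>)\<^sup>2) powr (1 - \<nu>)))) \<partial>M)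
       = (\<integral>\<^sup>+u. ennreal (indicator {0<..} u * exp (- (B * u powr (1 - \<nu>) + u))) \<partial>lborel)"
proof -
  have "(\<integral>\<^sup>+\<omega>. ennreal (exp (- (B * l powr (1 - \<nu>) * ((R \<omega>)\<^sup>2) powr (1 - \<nu>)))) \<partial>M)
      = (\<integral>\<^sup>+s. ennreal (exp (- (B * l powr (1 - \<nu>) * s powr (1 - \<nu>)))) \<partial>exp_distr l)"
    unfolding R[symmetric] by (rule nn_integral_distr[symmetric]) measurable
  also have "\<dots> = (\<integral>\<^sup>+s. ennreal (exponential_density l s) * ennreal (exp (- (B * l powr (1 - \<nu>) * s powr (1 - \<nu>)))) \<partial>lborel)"
    unfolding exp_distr_def by (rule nn_integral_density) (auto simp: exponential_density_nonneg l)
  finally show ?thesis using l by (simp add: nn_integral_exponential_density_stretched_exp)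
qed

lemma (in finite_measure) measure_eq_set_lebesgue_integral:
  fixes f :: "real \<Rightarrow> real"
  assumes E: "emeasure M E = (\<integral>\<^sup>+u. ennreal (indicator S u * f u) \<partial>lborel)"
    and [measurable]: "S \<in> sets borel" "f \<in> borel_measurable borel" and f: "\<And>u. f u \<ge> 0"
  shows "measure M E = (\<integral>u\<in>S. f u \<partial>lborel)"
proof -
  have "(\<integral>\<^sup>+u. ennreal (indicator S u * f u) \<partial>lborel) < \<top>"
    unfolding E[symmetric] by (simp add: less_top[symmetric])
  hence "integrable lborel (\<lambda>u. indicator S u * f u)"
    using f by (intro integrableI_nonneg) auto
  hence "emeasure M E = ennreal (\<integral>u\<in>S. f u \<partial>lborel)"
    unfolding E set_lebesgue_integral_def using f by (subst nn_integral_eq_integral) auto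
  moreover have "(\<integral>u\<in>S. f u \<partial>lborel) \<ge> 0"
    unfolding set_lebesgue_integral_def using f by (intro Bochner_Integration.integral_nonneg) simp
  ultimately show ?thesis by (simp add: measure_def)
qed

theorem mainTheorem4:
  fixes M :: "'w measure"
    and \<alpha> \<theta>c Qbar lmin lb lmax ld \<rho> \<eta>a \<nu> :: real
    and R1 H1 :: "'w \<Rightarrow> real"
    and \<Phi> :: "'w \<Rightarrow> ((real \<times> real) \<times> real \<times> real) set"
  assumes "prob_space M"
    and "\<alpha> > 2" and "\<theta>c > 0" and "Qbar > 0"
    and "0 < lmin" and "lmin \<le> lb" and "lb \<le> lmax"
    and "ld > 0" and "0 < \<rho>" and "\<rho> < 1" and "0 < \<eta>a" and "\<eta>a \<le> 1"
    and "\<nu> > - 2 / \<alpha>"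
    \<comment> \<open>distance of the desired transmitter: R1 \<ge> 0, R1^2 ~ Exp(pi lambda_b)\<close>
    and "R1 \<in> borel_measurable M" and "\<forall>\<omega>\<in>space M. R1 \<omega> \<ge> 0"
    and "distr M borel (\<lambda>\<omega>. (R1 \<omega>)\<^sup>2) = exp_distr (pi * lb)"
    \<comment> \<open>fading of the desired link: H1 ~ Exp(1)\<close>
    and "H1 \<in> borel_measurable M"
    and "distr M borel H1 = exp_distr 1"
    \<comment> \<open>interferers: independently marked PPP (location D_j, power Q_j, fading H_j)\<close>
    and "prob_space.poisson_point_process M
           (interferer_intensity (\<rho> * \<eta>a * ld) \<alpha> \<nu> Qbar lmin lmax lb) \<Phi>"
    \<comment> \<open>mutual independence of R1, H1 and the marked PPP\<close>
    and "prob_space.indep_sets M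
           (\<lambda>i::nat. if i = 0 then {R1 -` B \<inter> space M | B. B \<in> sets borel}
                     else if i = 1 then {H1 -` B \<inter> space M | B. B \<in> sets borel}
                     else {\<Phi> -` B \<inter> space M | B. B \<in> sets (ppp_space
                            (interferer_intensity (\<rho> * \<eta>a * ld) \<alpha> \<nu> Qbar lmin lmax lb))})
           {0, 1, 2}"
  shows "measure M {\<omega> \<in> space M.
            ennreal (Qpow \<alpha> \<nu> Qbar lmin lmax (R1 \<omega>) * H1 \<omega> * R1 \<omega> powr (- \<alpha>))
            \<ge> ennreal \<theta>c * (\<Sum>\<^sub>\<infinity>p\<in>\<Phi> \<omega>.
                 ennreal (fst (snd p) * snd (snd p) * norm (fst p) powr (- \<alpha>)))}
       = (let na = ld / lb * \<rho> * \<eta>a * \<theta>c powr (2 / \<alpha>) * Gamma (1 + 2 / \<alpha>) * Gamma (1 - 2 / \<alpha>)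
          in (\<integral>u\<in>{0<..}. exp (- (na * Gamma (1 + \<nu>) * u powr (1 - \<nu>) + u)) \<partial>lborel))"
proof -
  interpret prob_space M by fact
  have lb: "lb > 0" and lmax: "lmax > 0" and lI: "\<rho> * \<eta>a * ld > 0"
    using assms(5-9,11) by auto
  define \<mu> where "\<mu> = interferer_intensity (\<rho> * \<eta>a * ld) \<alpha> \<nu> Qbar lmin lmax lb"
  define \<sigma> where "\<sigma> r = Qpow \<alpha> \<nu> Qbar lmin lmax r * r powr (- \<alpha>)" for r
  define B where "B = \<rho> * \<eta>a * ld / lb * \<theta>c powr (2 / \<alpha>) * Gamma (1 + 2 / \<alpha>) * Gamma (1 - 2 / \<alpha>) * Gamma (1 + \<nu>)"
  have \<Phi>_meas [measurable]: "\<Phi> \<in> measurable M (ppp_space \<mu>)"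
    using assms(19) unfolding \<mu>_def poisson_point_process_def by simp
  have I_meas [measurable]: "interference \<alpha> \<in> borel_measurable (ppp_space \<mu>)"
    unfolding \<mu>_def using assms lb lmax lI by (intro interference_borel_measurable) auto
  have \<sigma>_meas [measurable]: "\<sigma> \<in> borel_measurable borel" unfolding \<sigma>_def by measurable
  have joint: "distr M (borel \<Otimes>\<^sub>M (borel \<Otimes>\<^sub>M ppp_space \<mu>)) (\<lambda>\<omega>. (R1 \<omega>, H1 \<omega>, \<Phi> \<omega>))
      = distr M borel R1 \<Otimes>\<^sub>M (exp_distr 1 \<Otimes>\<^sub>M distr M (ppp_space \<mu>) \<Phi>)"
    unfolding assms(18)[symmetric] \<mu>_def using assms(14,17,20)
    by (intro distr_triple_eq_pair_measure) (simp_all add: \<mu>_def[symmetric])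
  have R1_pos: "AE \<omega> in M. R1 \<omega> > 0" by (rule AE_pos_if_square_exp_distr[OF assms(14-16)])
  have laplace: "(\<integral>\<^sup>+\<omega>'. exp_neg_ennreal (ennreal (\<theta>c / \<sigma> r) * interference \<alpha> (\<Phi> \<omega>')) \<partial>M)
      = ennreal (exp (- (B * (pi * lb) powr (1 - \<nu>) * (r\<^sup>2) powr (1 - \<nu>))))" if "r > 0" for r
    unfolding \<sigma>_def B_def
    by (rule laplace_interference_received_power[OF assms(19,2,13,4,5) lmax lb _ assms(3) that]) (use lI in simp)
  have "emeasure M {\<omega> \<in> space M. ennreal \<theta>c * interference \<alpha> (\<Phi> \<omega>) \<le> ennreal (\<sigma> (R1 \<omega>) * H1 \<omega>)}
      = (\<integral>\<^sup>+\<omega>. (\<integral>\<^sup>+\<omega>'. exp_neg_ennreal (ennreal (\<theta>c / \<sigma> (R1 \<omega>)) * interference \<alpha> (\<Phi> \<omega>')) \<partial>M) \<partial>M)"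
    using R1_pos Qpow_pos[OF assms(2,13,4,5) lmax]
    by (intro coverage_given_distance[OF assms(14,17) \<Phi>_meas I_meas \<sigma>_meas joint _ assms(3)])
      (auto elim!: eventually_mono simp: \<sigma>_def)
  also have "\<dots> = (\<integral>\<^sup>+\<omega>. ennreal (exp (- (B * (pi * lb) powr (1 - \<nu>) * ((R1 \<omega>)\<^sup>2) powr (1 - \<nu>)))) \<partial>M)"
    using R1_pos by (intro nn_integral_cong_AE) (auto elim!: eventually_mono simp: laplace)
  also have "\<dots> = (\<integral>\<^sup>+u. ennreal (indicator {0<..} u * exp (- (B * u powr (1 - \<nu>) + u))) \<partial>lborel)"
    using assms(14,16) lb by (intro nn_integral_stretched_exp_distance) auto
  finally have "measure M {\<omega> \<in> space M. ennreal \<theta>c * interference \<alpha> (\<Phi> \<omega>) \<le> ennreal (\<sigma> (R1 \<omega>) * H1 \<omega>)}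
      = (\<integral>u\<in>{0<..}. exp (- (B * u powr (1 - \<nu>) + u)) \<partial>lborel)"
    by (rule measure_eq_set_lebesgue_integral) auto
  thus ?thesis by (simp add: Let_def B_def \<sigma>_def interference_def mult_ac)
qed

end
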